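(* In the setting below, let $W=\ker Q=\{z\in Z: Q(z)=0\}$ and assume that $Z^*$ is the complemented (topological direct) sum of $Y$ and $Q^*(X^* )$. Then $Y$ is isomorphic to $W^*$.
   Context: Setting: $X$ is a separable Banach space, $(x_n)$ a sequence in $S_X$ with $\{\pm x_n\}$ dense in $S_X$; $U$ is a Banach space with a normalized $1$-unconditional boundedly complete basis $(u_n)$. For finite $I,J\subseteq\mathbb N$, $I<J$ means $\max I<\min J$. $Z$ is the completion of $c_{00}$ (unit vectors $(e_i)$) under $\|a\|_Z=\max\{\|\sum_{j=1}^k\|\sum_{i\in I_j}a_ix_i\|_Xu_{\min I_j}\|_U: k\in\mathbb N,\ I_1<\dots<I_k\text{ intervals}\}$. $(e_j^* )$ are the coordinate functionals of the basis $(e_j)$ of $Z$, $Y=\overline{\mathrm{span}}\{e_j^*\}\subseteq Z^*$. $Q:Z\to X$ is the quotient map $Q(\sum a_je_j)=\sum a_jx_j$, and $Q^*:X^*\to Z^*$ its adjoint. *)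

theory Defs
  imports "HOL-Analysis.Analysis"
begin

text \<open>Scalars are real throughout. Indices start at 0.\<close>

definition schauder_basis :: "(nat \<Rightarrow> 'b::real_normed_vector) \<Rightarrow> bool" where
  "schauder_basis u \<longleftrightarrow> (\<forall>v. \<exists>!c. (\<lambda>n. c n *\<^sub>R u n) sums v)"

definition one_unconditional :: "(nat \<Rightarrow> 'b::real_normed_vector) \<Rightarrow> bool" where
  "one_unconditional u \<longleftrightarrow>
     (\<forall>n a \<epsilon>. (\<forall>i. \<bar>\<epsilon> i\<bar> = (1::real)) \<longrightarrow>
        norm (\<Sum>i<n. (\<epsilon> i * a i) *\<^sub>R u i) = norm (\<Sum>i<n. a i *\<^sub>R u i))"

definition boundedly_complete :: "(nat \<Rightarrow> 'b::real_normed_vector) \<Rightarrow> bool" where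
  "boundedly_complete u \<longleftrightarrow>
     (\<forall>a. (\<exists>B. \<forall>n. norm (\<Sum>i<n. a i *\<^sub>R u i) \<le> B) \<longrightarrow> summable (\<lambda>i. a i *\<^sub>R u i))"

text \<open>Families of successive intervals I_1 < ... < I_k (k \<ge> 1), I_j = {m_j..n_j}.\<close>
definition blocks :: "(nat \<times> nat) list \<Rightarrow> bool" where
  "blocks l \<longleftrightarrow> l \<noteq> [] \<and> (\<forall>p\<in>set l. fst p \<le> snd p) \<and> sorted_wrt (\<lambda>p q. snd p < fst q) l"

definition zval :: "(nat \<Rightarrow> 'a::real_normed_vector) \<Rightarrow> (nat \<Rightarrow> 'b::real_normed_vector)
    \<Rightarrow> (nat \<Rightarrow> real) \<Rightarrow> (nat \<times> nat) list \<Rightarrow> real" where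
  "zval x u a l = norm (sum_list (map (\<lambda>p. norm (\<Sum>i\<in>{fst p..snd p}. a i *\<^sub>R x i) *\<^sub>R u (fst p)) l))"

definition znorm :: "(nat \<Rightarrow> 'a::real_normed_vector) \<Rightarrow> (nat \<Rightarrow> 'b::real_normed_vector)
    \<Rightarrow> (nat \<Rightarrow> real) \<Rightarrow> real" where
  "znorm x u a = Sup {zval x u a l | l. blocks l}"

text \<open>Z, the completion of c00, realised as the scalar sequences whose expansion
  in the unit vector basis converges (partial sums are Cauchy in the Z-norm).\<close>
definition Zsp :: "(nat \<Rightarrow> 'a::real_normed_vector) \<Rightarrow> (nat \<Rightarrow> 'b::real_normed_vector)
    \<Rightarrow> (nat \<Rightarrow> real) set" where
  "Zsp x u = {a. \<forall>\<epsilon>>0. \<exists>N. \<forall>m n. N \<le> m \<longrightarrow> m \<le> n \<longrightarrow>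
                 znorm x u (\<lambda>i. if m \<le> i \<and> i < n then a i else 0) < \<epsilon>}"

definition bdd_funcs :: "(nat \<Rightarrow> real) set \<Rightarrow> ((nat \<Rightarrow> real) \<Rightarrow> real)
    \<Rightarrow> ((nat \<Rightarrow> real) \<Rightarrow> real) set" where
  "bdd_funcs S N = {f. (\<forall>a\<in>S. \<forall>b\<in>S. f (\<lambda>i. a i + b i) = f a + f b)
      \<and> (\<forall>r. \<forall>a\<in>S. f (\<lambda>i. r * a i) = r * f a)
      \<and> (\<exists>C. \<forall>a\<in>S. \<bar>f a\<bar> \<le> C * N a)
      \<and> (\<forall>a. a \<notin> S \<longrightarrow> f a = 0)}"

definition dnorm :: "(nat \<Rightarrow> real) set \<Rightarrow> ((nat \<Rightarrow> real) \<Rightarrow> real)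
    \<Rightarrow> ((nat \<Rightarrow> real) \<Rightarrow> real) \<Rightarrow> real" where
  "dnorm S N f = Sup {\<bar>f a\<bar> | a. a \<in> S \<and> N a \<le> 1}"

text \<open>Coordinate functionals e_j^* on Z and Y = closed span of them in Z^*.\<close>
definition coord_fun :: "(nat \<Rightarrow> real) set \<Rightarrow> nat \<Rightarrow> (nat \<Rightarrow> real) \<Rightarrow> real" where
  "coord_fun S j = (\<lambda>a. if a \<in> S then a j else 0)"

definition Yspace :: "(nat \<Rightarrow> 'a::real_normed_vector) \<Rightarrow> (nat \<Rightarrow> 'b::real_normed_vector)
    \<Rightarrow> ((nat \<Rightarrow> real) \<Rightarrow> real) set" where
  "Yspace x u = {f \<in> bdd_funcs (Zsp x u) (znorm x u).
      \<forall>\<epsilon>>0. \<exists>n c. dnorm (Zsp x u) (znorm x u)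
          (\<lambda>a. f a - (\<Sum>j<n. c j * coord_fun (Zsp x u) j a)) < \<epsilon>}"

definition Qmap :: "(nat \<Rightarrow> 'a::real_normed_vector) \<Rightarrow> (nat \<Rightarrow> real) \<Rightarrow> 'a" where
  "Qmap x a = (\<Sum>j. a j *\<^sub>R x j)"

definition Wsp :: "(nat \<Rightarrow> 'a::real_normed_vector) \<Rightarrow> (nat \<Rightarrow> 'b::real_normed_vector)
    \<Rightarrow> (nat \<Rightarrow> real) set" where
  "Wsp x u = {a \<in> Zsp x u. Qmap x a = 0}"

definition Qadj_range :: "(nat \<Rightarrow> 'a::real_normed_vector) \<Rightarrow> (nat \<Rightarrow> 'b::real_normed_vector)
    \<Rightarrow> ((nat \<Rightarrow> real) \<Rightarrow> real) set" where
  "Qadj_range x u = {(\<lambda>a. if a \<in> Zsp x u then \<phi> (Qmap x a) else 0) | \<phi>::'a \<Rightarrow> real. bounded_linear \<phi>}"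

definition top_direct_sum :: "((nat \<Rightarrow> real) \<Rightarrow> real) set \<Rightarrow> (((nat \<Rightarrow> real) \<Rightarrow> real) \<Rightarrow> real)
    \<Rightarrow> ((nat \<Rightarrow> real) \<Rightarrow> real) set \<Rightarrow> ((nat \<Rightarrow> real) \<Rightarrow> real) set \<Rightarrow> bool" where
  "top_direct_sum E NE A B \<longleftrightarrow> A \<subseteq> E \<and> B \<subseteq> E \<and> A \<inter> B = {(\<lambda>a. 0)}
     \<and> (\<forall>h\<in>E. \<exists>f\<in>A. \<exists>g\<in>B. h = (\<lambda>a. f a + g a))
     \<and> (\<exists>C. \<forall>f\<in>A. \<forall>g\<in>B. NE f \<le> C * NE (\<lambda>a. f a + g a))"

definition fs_isomorphic :: "((nat \<Rightarrow> real) \<Rightarrow> real) set \<Rightarrow> (((nat \<Rightarrow> real) \<Rightarrow> real) \<Rightarrow> real)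
    \<Rightarrow> ((nat \<Rightarrow> real) \<Rightarrow> real) set \<Rightarrow> (((nat \<Rightarrow> real) \<Rightarrow> real) \<Rightarrow> real) \<Rightarrow> bool" where
  "fs_isomorphic A NA B NB \<longleftrightarrow> (\<exists>T. T ` A = B \<and> inj_on T A
     \<and> (\<forall>f\<in>A. \<forall>g\<in>A. T (\<lambda>a. f a + g a) = (\<lambda>a. T f a + T g a))
     \<and> (\<forall>r. \<forall>f\<in>A. T (\<lambda>a. r * f a) = (\<lambda>a. r * T f a))
     \<and> (\<exists>c C. 0 < c \<and> (\<forall>f\<in>A. c * NA f \<le> NB (T f) \<and> NB (T f) \<le> C * NA f)))"

end

(* Restriction to W = ker Q is the isomorphism. It is injective on Y: a functional on Z
   vanishing on W factors through Q, because Q has a bounded right inverse (greedy expansion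
   of y along the dense signed sequence \<plusminus>x_n with |c_k| <= |y|/2^k), so it lies in
   Y \<inter> Q^* X^* = {0}. It is onto with bounded inverse: extend g \<in> W^* by Hahn-Banach to
   h \<in> Z^* with the same norm and split h = f + q with f \<in> Y, q \<in> Q^* X^*; q vanishes on W,
   so f restricts to g, and |f| <= C |h| = C |g| by the complementation constant. *)

theory Submission
  imports Defs "HOL-Library.Function_Algebras"
begin

instantiation "fun" :: (type, real_vector) real_vector
begin

definition scaleR_fun :: "real \<Rightarrow> ('a \<Rightarrow> 'b) \<Rightarrow> 'a \<Rightarrow> 'b" where
  "scaleR_fun r f = (\<lambda>x. r *\<^sub>R f x)"

instance
  by standard (auto simp: scaleR_fun_def fun_eq_iff algebra_simps)

end

lemma scaleR_fun_apply [simp]: "(r *\<^sub>R f) x = r *\<^sub>R f x"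
  by (simp add: scaleR_fun_def)

section \<open>Hahn-Banach extension\<close>

(* Partial extensions in the Zorn argument are represented by their graphs, so that
   extending a functional means enlarging its graph. *)
definition dominated_graphs ::
    "'v::real_vector set \<Rightarrow> 'v set \<Rightarrow> ('v \<Rightarrow> real) \<Rightarrow> ('v \<Rightarrow> real) \<Rightarrow> ('v \<times> real) set set" where
  "dominated_graphs V W p g = {G. G \<subseteq> V \<times> UNIV \<and> subspace G \<and> single_valued G
      \<and> (\<forall>a t. (a, t) \<in> G \<longrightarrow> t \<le> p a) \<and> (\<forall>a\<in>W. (a, g a) \<in> G)}"

lemma dominated_graphs_chain_bound:
  assumes "G0 \<in> dominated_graphs V W p g" and "C \<in> chains (dominated_graphs V W p g)"
  shows "\<exists>U\<in>dominated_graphs V W p g. \<forall>G\<in>C. G \<subseteq> U"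
proof (cases "C = {}")
  case False
  then obtain G1 where G1: "G1 \<in> C" by blast
  have CA: "\<And>G. G \<in> C \<Longrightarrow> G \<in> dominated_graphs V W p g"
    and common: "\<And>a b. a \<in> \<Union>C \<Longrightarrow> b \<in> \<Union>C \<Longrightarrow> \<exists>G\<in>C. a \<in> G \<and> b \<in> G"
    using assms(2) unfolding chains_def chain_subset_def by blast+
  have sub: "\<And>G. G \<in> C \<Longrightarrow> subspace G" and sv: "\<And>G. G \<in> C \<Longrightarrow> single_valued G"
    using CA by (auto simp: dominated_graphs_def)
  have "subspace (\<Union>C)"
    unfolding subspace_def
  proof (intro conjI ballI allI)
    show "0 \<in> \<Union>C"
      using G1 subspace_0[OF sub[OF G1]] by blast
    show "a + b \<in> \<Union>C" if "a \<in> \<Union>C" "b \<in> \<Union>C" for a b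
      using common[OF that] subspace_add[OF sub] by blast
    show "c *\<^sub>R a \<in> \<Union>C" if "a \<in> \<Union>C" for a c
      using that subspace_scale[OF sub] by blast
  qed
  moreover have "single_valued (\<Union>C)"
    unfolding single_valued_def
  proof (intro allI impI)
    fix a t t' assume "(a, t) \<in> \<Union>C" "(a, t') \<in> \<Union>C"
    then obtain G where "G \<in> C" "(a, t) \<in> G" "(a, t') \<in> G"
      using common by blast
    then show "t = t'"
      using sv single_valuedD by metis
  qed
  moreover have "\<Union>C \<subseteq> V \<times> UNIV" "\<forall>a t. (a, t) \<in> \<Union>C \<longrightarrow> t \<le> p a" "\<forall>a\<in>W. (a, g a) \<in> \<Union>C"
    using CA G1 unfolding dominated_graphs_def by blast+
  ultimately have "\<Union>C \<in> dominated_graphs V W p g"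
    unfolding dominated_graphs_def by blast
  then show ?thesis by blast
qed (use assms(1) in blast)

lemma dominated_graph_separating_constant:
  assumes G: "G \<in> dominated_graphs V W p g" and V: "subspace V" and a: "a \<in> V"
    and p_add: "\<And>b c. b \<in> V \<Longrightarrow> c \<in> V \<Longrightarrow> p (b + c) \<le> p b + p c"
  obtains c where "\<And>s t. (s, t) \<in> G \<Longrightarrow> t - p (s - a) \<le> c \<and> c \<le> p (s + a) - t"
proof -
  have GV: "G \<subseteq> V \<times> UNIV" and Gsub: "subspace G" and Gp: "\<And>s t. (s, t) \<in> G \<Longrightarrow> t \<le> p s"
    using G by (auto simp: dominated_graphs_def)
  define S where "S = {t - p (s - a) | s t. (s, t) \<in> G}"
  have below: "y \<le> p (s' + a) - t'" if "y \<in> S" "(s', t') \<in> G" for y s' t'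
  proof -
    obtain s t where st: "(s, t) \<in> G" "y = t - p (s - a)"
      using \<open>y \<in> S\<close> unfolding S_def by blast
    have "(s + s', t + t') \<in> G"
      using subspace_add[OF Gsub st(1) that(2)] by simp
    then have "t + t' \<le> p ((s - a) + (s' + a))"
      using Gp by simp
    also have "\<dots> \<le> p (s - a) + p (s' + a)"
      using GV st(1) that(2) a by (intro p_add subspace_diff[OF V] subspace_add[OF V]) auto
    finally show ?thesis
      using st by simp
  qed
  have "(0, 0) \<in> G"
    using subspace_0[OF Gsub] by (simp add: zero_prod_def)
  then have "S \<noteq> {}" and "bdd_above S"
    unfolding S_def bdd_above_def using below[of _ 0 0] by (auto simp: S_def)
  have "t - p (s - a) \<le> Sup S \<and> Sup S \<le> p (s + a) - t" if "(s, t) \<in> G" for s t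
  proof
    show "t - p (s - a) \<le> Sup S"
      using that \<open>bdd_above S\<close> by (intro cSup_upper) (auto simp: S_def)
    show "Sup S \<le> p (s + a) - t"
      using that below \<open>S \<noteq> {}\<close> by (intro cSup_least) auto
  qed
  then show thesis by (rule that)
qed

lemma single_valued_graph_extension:
  fixes G :: "('v::real_vector \<times> real) set"
  assumes G: "subspace G" "single_valued G" and new: "a \<notin> Domain G"
  shows "single_valued {z + y | z y. z \<in> G \<and> y \<in> span {(a, c)}}"
proof (rule single_valuedI)
  fix b t1 t2
  assume "(b, t1) \<in> {z + y | z y. z \<in> G \<and> y \<in> span {(a, c)}}"
    and "(b, t2) \<in> {z + y | z y. z \<in> G \<and> y \<in> span {(a, c)}}"
  then obtain z1 z2 r r' where z: "z1 \<in> G" "z2 \<in> G"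
    "(b, t1) = z1 + r *\<^sub>R (a, c)" "(b, t2) = z2 + r' *\<^sub>R (a, c)"
    unfolding span_singleton by blast
  have b: "b = fst z1 + r *\<^sub>R a" "b = fst z2 + r' *\<^sub>R a"
    and t: "t1 = snd z1 + r * c" "t2 = snd z2 + r' * c"
    using arg_cong[where f = fst, OF z(3)] arg_cong[where f = snd, OF z(3)]
      arg_cong[where f = fst, OF z(4)] arg_cong[where f = snd, OF z(4)] by simp_all
  have "r = r'"
  proof (rule ccontr)
    assume "r \<noteq> r'"
    define w where "w = (1 / (r - r')) *\<^sub>R (z2 - z1)"
    have "w \<in> G"
      unfolding w_def using subspace_scale[OF G(1) subspace_diff[OF G(1) z(2,1)]] .
    moreover have "fst z2 - fst z1 = (r - r') *\<^sub>R a"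
      using b by (simp add: algebra_simps)
    then have "fst w = (1 / (r - r')) *\<^sub>R ((r - r') *\<^sub>R a)"
      by (simp add: w_def)
    then have "fst w = a"
      using \<open>r \<noteq> r'\<close> by simp
    ultimately have "(a, snd w) \<in> G"
      by (metis prod.collapse)
    then show False
      using new by blast
  qed
  then have "fst z1 = fst z2"
    using b by simp
  moreover have "(fst z1, snd z1) \<in> G" "(fst z2, snd z2) \<in> G"
    using z(1,2) by simp_all
  ultimately have "snd z1 = snd z2"
    using single_valuedD[OF G(2)] by metis
  then show "t1 = t2"
    using t \<open>r = r'\<close> by simp
qed

lemma dominated_graph_line_bound:
  assumes G: "G \<in> dominated_graphs V W p g" and V: "subspace V" and a: "a \<in> V"
    and p_scale: "\<And>r b. b \<in> V \<Longrightarrow> 0 < r \<Longrightarrow> p (r *\<^sub>R b) = r * p b"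
    and c: "\<And>s t. (s, t) \<in> G \<Longrightarrow> t - p (s - a) \<le> c \<and> c \<le> p (s + a) - t"
    and st: "(s, t) \<in> G"
  shows "t + r * c \<le> p (s + r *\<^sub>R a)"
proof -
  have Gsub: "subspace G" and sV: "s \<in> V" and Gp: "t \<le> p s"
    using G st by (auto simp: dominated_graphs_def)
  txt \<open>Rescale \<open>(s, t)\<close> by \<open>1 / \<bar>r\<bar>\<close> to reduce to one of the two inequalities defining \<open>c\<close>.\<close>
  consider "r = 0" | "r > 0" | "r < 0"
    by linarith
  then show ?thesis
  proof cases
    case 1
    then show ?thesis
      using Gp by simp
  next
    case 2
    have "((1 / r) *\<^sub>R s, (1 / r) * t) \<in> G"
      using subspace_scale[OF Gsub st, of "1 / r"] by simp
    then have "r * c \<le> r * (p ((1 / r) *\<^sub>R s + a) - (1 / r) * t)"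
      using c 2 by (intro mult_left_mono) auto
    moreover have "(1 / r) *\<^sub>R s + a \<in> V"
      using sV a subspace_add[OF V] subspace_scale[OF V] by blast
    then have "p (s + r *\<^sub>R a) = r * p ((1 / r) *\<^sub>R s + a)"
      using p_scale[of "(1 / r) *\<^sub>R s + a" r] 2 by (simp add: algebra_simps)
    ultimately show ?thesis
      using 2 by (simp add: algebra_simps)
  next
    case 3
    define q where "q = - r"
    have q: "q > 0"
      using 3 by (simp add: q_def)
    have "((1 / q) *\<^sub>R s, (1 / q) * t) \<in> G"
      using subspace_scale[OF Gsub st, of "1 / q"] by simp
    then have "q * ((1 / q) * t - p ((1 / q) *\<^sub>R s - a)) \<le> q * c"
      using c q by (intro mult_left_mono) auto
    moreover have "(1 / q) *\<^sub>R s - a \<in> V"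
      using sV a subspace_diff[OF V] subspace_scale[OF V] by blast
    then have "p (s + r *\<^sub>R a) = q * p ((1 / q) *\<^sub>R s - a)"
      using p_scale[of "(1 / q) *\<^sub>R s - a" q] q by (simp add: q_def algebra_simps)
    ultimately show ?thesis
      using q by (simp add: q_def algebra_simps)
  qed
qed

lemma dominated_graph_extend:
  assumes G: "G \<in> dominated_graphs V W p g" and V: "subspace V" and a: "a \<in> V"
    and new: "a \<notin> Domain G"
    and p_add: "\<And>b c. b \<in> V \<Longrightarrow> c \<in> V \<Longrightarrow> p (b + c) \<le> p b + p c"
    and p_scale: "\<And>r b. b \<in> V \<Longrightarrow> 0 < r \<Longrightarrow> p (r *\<^sub>R b) = r * p b"
  shows "\<exists>G'\<in>dominated_graphs V W p g. G \<subseteq> G' \<and> a \<in> Domain G'"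
proof -
  have GV: "G \<subseteq> V \<times> UNIV" and Gsub: "subspace G" and Gsv: "single_valued G"
    using G by (auto simp: dominated_graphs_def)
  obtain c where c: "\<And>s t. (s, t) \<in> G \<Longrightarrow> t - p (s - a) \<le> c \<and> c \<le> p (s + a) - t"
    using dominated_graph_separating_constant[OF G V a p_add] by blast
  define G' where "G' = {z + y | z y. z \<in> G \<and> y \<in> span {(a, c)}}"
  have memG': "(s + r *\<^sub>R a, t + r * c) \<in> G'" if "(s, t) \<in> G" for s t r
  proof -
    have "(s + r *\<^sub>R a, t + r * c) = (s, t) + r *\<^sub>R (a, c)"
      by simp
    then show ?thesis
      unfolding G'_def span_singleton using that by blast
  qed
  have G'E: "\<exists>s t r. (s, t) \<in> G \<and> z = (s + r *\<^sub>R a, t + r * c)" if "z \<in> G'" for z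
    using that unfolding G'_def span_singleton by auto
  have "G' \<in> dominated_graphs V W p g"
    unfolding dominated_graphs_def mem_Collect_eq
  proof (intro conjI ballI allI impI)
    show "G' \<subseteq> V \<times> UNIV"
      using G'E GV a subspace_add[OF V] subspace_scale[OF V] by fastforce
    show "subspace G'"
      unfolding G'_def by (intro subspace_sums Gsub subspace_span)
    show "single_valued G'"
      unfolding G'_def by (rule single_valued_graph_extension[OF Gsub Gsv new])
    show "t \<le> p b" if "(b, t) \<in> G'" for b t
      using G'E[OF that] dominated_graph_line_bound[OF G V a p_scale c] by auto
    show "(b, g b) \<in> G'" if "b \<in> W" for b
      using memG'[of b "g b" 0] G that by (simp add: dominated_graphs_def)
  qed
  moreover have "G \<subseteq> G'"
    using memG'[of _ _ 0] by auto
  moreover have "(0, 0) \<in> G"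
    using subspace_0[OF Gsub] by (simp add: zero_prod_def)
  then have "a \<in> Domain G'"
    using memG'[of 0 0 1] by force
  ultimately show ?thesis by blast
qed

lemma graph_in_dominated_graphs:
  assumes W: "subspace W" and WV: "W \<subseteq> V"
    and g_add: "\<And>a b. a \<in> W \<Longrightarrow> b \<in> W \<Longrightarrow> g (a + b) = g a + g b"
    and g_scale: "\<And>r a. a \<in> W \<Longrightarrow> g (r *\<^sub>R a) = r * g a"
    and g_le: "\<And>a. a \<in> W \<Longrightarrow> g a \<le> p a"
  shows "(\<lambda>a. (a, g a)) ` W \<in> dominated_graphs V W p g"
proof -
  have "subspace ((\<lambda>a. (a, g a)) ` W)"
    unfolding subspace_def
  proof (intro conjI ballI allI)
    show "0 \<in> (\<lambda>a. (a, g a)) ` W"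
      using g_scale[of 0 0] subspace_0[OF W] by (force simp: zero_prod_def)
    show "z + z' \<in> (\<lambda>a. (a, g a)) ` W" if "z \<in> (\<lambda>a. (a, g a)) ` W" "z' \<in> (\<lambda>a. (a, g a)) ` W" for z z'
      using that g_add subspace_add[OF W] by force
    show "c *\<^sub>R z \<in> (\<lambda>a. (a, g a)) ` W" if "z \<in> (\<lambda>a. (a, g a)) ` W" for z c
      using that g_scale subspace_scale[OF W] by force
  qed
  then show ?thesis
    using WV g_le by (auto simp: dominated_graphs_def single_valued_def)
qed

theorem hahn_banach_sublinear:
  fixes V W :: "'v::real_vector set" and p g :: "'v \<Rightarrow> real"
  assumes V: "subspace V" and W: "subspace W" and WV: "W \<subseteq> V"
    and p_add: "\<And>a b. a \<in> V \<Longrightarrow> b \<in> V \<Longrightarrow> p (a + b) \<le> p a + p b"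
    and p_scale: "\<And>r a. a \<in> V \<Longrightarrow> 0 < r \<Longrightarrow> p (r *\<^sub>R a) = r * p a"
    and g_add: "\<And>a b. a \<in> W \<Longrightarrow> b \<in> W \<Longrightarrow> g (a + b) = g a + g b"
    and g_scale: "\<And>r a. a \<in> W \<Longrightarrow> g (r *\<^sub>R a) = r * g a"
    and g_le: "\<And>a. a \<in> W \<Longrightarrow> g a \<le> p a"
  obtains h where "\<And>a b. a \<in> V \<Longrightarrow> b \<in> V \<Longrightarrow> h (a + b) = h a + h b"
    and "\<And>r a. a \<in> V \<Longrightarrow> h (r *\<^sub>R a) = r * h a"
    and "\<And>a. a \<in> W \<Longrightarrow> h a = g a" and "\<And>a. a \<in> V \<Longrightarrow> h a \<le> p a"
proof -
  let ?A = "dominated_graphs V W p g"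
  have "(\<lambda>a. (a, g a)) ` W \<in> ?A"
    using graph_in_dominated_graphs[OF W WV g_add g_scale g_le] .
  then obtain M where M: "M \<in> ?A" and Mmax: "\<And>G. G \<in> ?A \<Longrightarrow> M \<subseteq> G \<Longrightarrow> G = M"
    using Zorn_Lemma2[of ?A] dominated_graphs_chain_bound by meson
  have Msub: "subspace M" and Msv: "single_valued M"
    and Mp: "\<And>a t. (a, t) \<in> M \<Longrightarrow> t \<le> p a" and MW: "\<And>a. a \<in> W \<Longrightarrow> (a, g a) \<in> M"
    using M by (auto simp: dominated_graphs_def)
  have total: "a \<in> Domain M" if "a \<in> V" for a
    using dominated_graph_extend[OF M V that _ p_add p_scale] Mmax by blast
  define h where "h a = (THE t. (a, t) \<in> M)" for a
  have hM: "(a, t) \<in> M \<Longrightarrow> h a = t" for a t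
    using Msv unfolding h_def by (auto dest: single_valuedD)
  have graph: "(a, h a) \<in> M" if "a \<in> V" for a
    using total[OF that] hM by auto
  show thesis
  proof
    show "h (a + b) = h a + h b" if "a \<in> V" "b \<in> V" for a b
      using subspace_add[OF Msub graph[OF that(1)] graph[OF that(2)]] hM by simp
    show "h (r *\<^sub>R a) = r * h a" if "a \<in> V" for r a
      using subspace_scale[OF Msub graph[OF that], of r] hM by simp
    show "h a = g a" if "a \<in> W" for a
      using MW[OF that] hM by simp
    show "h a \<le> p a" if "a \<in> V" for a
      using Mp[OF graph[OF that]] .
  qed
qed

section \<open>Bounded functionals on seminormed subspaces\<close>

definition seminorm_on :: "'v::real_vector set \<Rightarrow> ('v \<Rightarrow> real) \<Rightarrow> bool" where
  "seminorm_on S N \<longleftrightarrow> subspace S \<and> (\<forall>a\<in>S. 0 \<le> N a)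
     \<and> (\<forall>a\<in>S. \<forall>b\<in>S. N (a + b) \<le> N a + N b) \<and> (\<forall>r. \<forall>a\<in>S. N (r *\<^sub>R a) = \<bar>r\<bar> * N a)"

lemma seminorm_onD:
  assumes "seminorm_on S N"
  shows "subspace S" and "a \<in> S \<Longrightarrow> 0 \<le> N a"
    and "a \<in> S \<Longrightarrow> b \<in> S \<Longrightarrow> N (a + b) \<le> N a + N b"
    and "a \<in> S \<Longrightarrow> N (r *\<^sub>R a) = \<bar>r\<bar> * N a"
  using assms by (auto simp: seminorm_on_def)

lemma seminorm_on_zero: "seminorm_on S N \<Longrightarrow> N 0 = 0"
  using seminorm_onD(4)[of S N 0 0] subspace_0[OF seminorm_onD(1)] by force

lemma seminorm_on_subspace: "seminorm_on S N \<Longrightarrow> subspace W \<Longrightarrow> W \<subseteq> S \<Longrightarrow> seminorm_on W N"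
  unfolding seminorm_on_def subset_eq by blast

lemma bdd_funcs_add:
  assumes "f \<in> bdd_funcs S N" "a \<in> S" "b \<in> S"
  shows "f (a + b) = f a + f b"
proof -
  have "f (\<lambda>i. a i + b i) = f a + f b"
    using assms unfolding bdd_funcs_def by blast
  then show ?thesis
    by (simp only: plus_fun_def)
qed

lemma bdd_funcs_scale:
  assumes "f \<in> bdd_funcs S N" "a \<in> S"
  shows "f (r *\<^sub>R a) = r * f a"
proof -
  have "f (\<lambda>i. r * a i) = r * f a"
    using assms unfolding bdd_funcs_def by blast
  then show ?thesis
    by (simp only: scaleR_fun_def real_scaleR_def)
qed

lemma bdd_funcs_outside: "f \<in> bdd_funcs S N \<Longrightarrow> a \<notin> S \<Longrightarrow> f a = 0"
  unfolding bdd_funcs_def by blast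

lemma bdd_funcs_bounded:
  assumes "f \<in> bdd_funcs S N"
  obtains C where "\<And>a. a \<in> S \<Longrightarrow> \<bar>f a\<bar> \<le> C * N a"
  using assms unfolding bdd_funcs_def by blast

lemma bdd_funcsI:
  assumes "\<And>a b. a \<in> S \<Longrightarrow> b \<in> S \<Longrightarrow> f (a + b) = f a + f b"
    and "\<And>r a. a \<in> S \<Longrightarrow> f (r *\<^sub>R a) = r * f a"
    and "\<And>a. a \<in> S \<Longrightarrow> \<bar>f a\<bar> \<le> C * N a"
    and "\<And>a. a \<notin> S \<Longrightarrow> f a = 0"
  shows "f \<in> bdd_funcs S N"
  using assms unfolding bdd_funcs_def plus_fun_def scaleR_fun_def real_scaleR_def by blast

lemma bdd_funcs_diff:
  assumes f: "f \<in> bdd_funcs S N" and g: "g \<in> bdd_funcs S N"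
  shows "(\<lambda>a. f a - g a) \<in> bdd_funcs S N"
proof -
  obtain C D where C: "\<And>a. a \<in> S \<Longrightarrow> \<bar>f a\<bar> \<le> C * N a" and D: "\<And>a. a \<in> S \<Longrightarrow> \<bar>g a\<bar> \<le> D * N a"
    using bdd_funcs_bounded[OF f] bdd_funcs_bounded[OF g] by metis
  show ?thesis
  proof (rule bdd_funcsI[where C = "C + D"])
    show "\<bar>f a - g a\<bar> \<le> (C + D) * N a" if "a \<in> S" for a
    proof -
      have "\<bar>f a - g a\<bar> \<le> \<bar>f a\<bar> + \<bar>g a\<bar>"
        by (rule abs_triangle_ineq4)
      also have "\<dots> \<le> (C + D) * N a"
        using C[OF that] D[OF that] by (simp add: distrib_right)
      finally show ?thesis .
    qed
  qed (auto simp: bdd_funcs_add[OF f] bdd_funcs_add[OF g] bdd_funcs_scale[OF f] bdd_funcs_scale[OF g]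
         bdd_funcs_outside[OF f] bdd_funcs_outside[OF g] algebra_simps)
qed

lemma bdd_funcs_diff_apply:
  assumes f: "f \<in> bdd_funcs S N" and S: "subspace S" and a: "a \<in> S" and b: "b \<in> S"
  shows "f (a - b) = f a - f b"
  using bdd_funcs_add[OF f subspace_diff[OF S a b] b] by simp

context
  fixes S :: "(nat \<Rightarrow> real) set" and N :: "(nat \<Rightarrow> real) \<Rightarrow> real"
  assumes N: "seminorm_on S N"
begin

lemma dnorm_upper:
  assumes f: "f \<in> bdd_funcs S N" and a: "a \<in> S" "N a \<le> 1"
  shows "\<bar>f a\<bar> \<le> dnorm S N f"
proof -
  obtain C where C: "\<And>a. a \<in> S \<Longrightarrow> \<bar>f a\<bar> \<le> C * N a"
    using bdd_funcs_bounded[OF f] by blast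
  have "bdd_above {\<bar>f b\<bar> | b. b \<in> S \<and> N b \<le> 1}"
  proof (rule bdd_aboveI)
    fix t assume "t \<in> {\<bar>f b\<bar> | b. b \<in> S \<and> N b \<le> 1}"
    then obtain b where b: "b \<in> S" "N b \<le> 1" "t = \<bar>f b\<bar>" by blast
    have "\<bar>f b\<bar> \<le> C * N b"
      using C b(1) .
    also have "\<dots> \<le> \<bar>C\<bar> * N b"
      using seminorm_onD(2)[OF N b(1)] by (intro mult_right_mono) auto
    also have "\<dots> \<le> \<bar>C\<bar>"
      using b(2) by (intro mult_left_le) auto
    finally show "t \<le> \<bar>C\<bar>"
      using b(3) by simp
  qed
  moreover have "\<bar>f a\<bar> \<in> {\<bar>f b\<bar> | b. b \<in> S \<and> N b \<le> 1}"
    using a by blast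
  ultimately show ?thesis
    unfolding dnorm_def by (rule cSup_upper[rotated])
qed

lemma dnorm_nonneg:
  assumes "f \<in> bdd_funcs S N"
  shows "0 \<le> dnorm S N f"
proof -
  have "\<bar>f 0\<bar> \<le> dnorm S N f"
    using dnorm_upper[OF assms subspace_0[OF seminorm_onD(1)[OF N]]] seminorm_on_zero[OF N] by simp
  then show ?thesis
    by linarith
qed

lemma dnorm_bound:
  assumes f: "f \<in> bdd_funcs S N" and a: "a \<in> S"
  shows "\<bar>f a\<bar> \<le> dnorm S N f * N a"
proof (cases "N a = 0")
  case True
  obtain C where "\<And>a. a \<in> S \<Longrightarrow> \<bar>f a\<bar> \<le> C * N a"
    using bdd_funcs_bounded[OF f] by blast
  then have "\<bar>f a\<bar> \<le> 0"
    using True a by (metis mult_zero_right)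
  then show ?thesis
    using True by simp
next
  case False
  then have pos: "N a > 0"
    using seminorm_onD(2)[OF N a] by simp
  define a' where "a' = (1 / N a) *\<^sub>R a"
  have "a' \<in> S" "N a' = 1"
    using subspace_scale[OF seminorm_onD(1)[OF N] a] seminorm_onD(4)[OF N a] pos by (auto simp: a'_def)
  then have "\<bar>f a'\<bar> \<le> dnorm S N f"
    using dnorm_upper[OF f] by simp
  moreover have "f a' = f a / N a"
    using bdd_funcs_scale[OF f a] by (simp add: a'_def)
  ultimately show ?thesis
    using pos by (simp add: abs_divide divide_le_eq)
qed

lemma dnorm_least:
  assumes B: "0 \<le> B" and bound: "\<And>a. a \<in> S \<Longrightarrow> \<bar>f a\<bar> \<le> B * N a"
  shows "dnorm S N f \<le> B"
  unfolding dnorm_def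
proof (rule cSup_least)
  have "0 \<in> S" "N 0 \<le> 1"
    using subspace_0[OF seminorm_onD(1)[OF N]] seminorm_on_zero[OF N] by simp_all
  then show "{\<bar>f a\<bar> | a. a \<in> S \<and> N a \<le> 1} \<noteq> {}"
    by blast
  fix t assume "t \<in> {\<bar>f a\<bar> | a. a \<in> S \<and> N a \<le> 1}"
  then obtain a where a: "a \<in> S" "N a \<le> 1" "t = \<bar>f a\<bar>" by blast
  have "\<bar>f a\<bar> \<le> B * N a"
    using bound a(1) .
  also have "\<dots> \<le> B"
    using B a(2) by (intro mult_left_le)
  finally show "t \<le> B"
    unfolding a(3) .
qed

lemma dnorm_diff_le:
  assumes f: "f \<in> bdd_funcs S N" and g: "g \<in> bdd_funcs S N"
  shows "dnorm S N (\<lambda>a. f a - g a) \<le> dnorm S N f + dnorm S N g"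
proof (rule dnorm_least)
  show "0 \<le> dnorm S N f + dnorm S N g"
    using dnorm_nonneg[OF f] dnorm_nonneg[OF g] by simp
  fix a assume a: "a \<in> S"
  have "\<bar>f a - g a\<bar> \<le> \<bar>f a\<bar> + \<bar>g a\<bar>"
    by (rule abs_triangle_ineq4)
  also have "\<dots> \<le> (dnorm S N f + dnorm S N g) * N a"
    using dnorm_bound[OF f a] dnorm_bound[OF g a] by (simp add: distrib_right)
  finally show "\<bar>f a - g a\<bar> \<le> (dnorm S N f + dnorm S N g) * N a" .
qed

end

lemma restrict_bdd_funcs:
  assumes N: "seminorm_on S N" and W: "subspace W" "W \<subseteq> S" and f: "f \<in> bdd_funcs S N"
  shows "(\<lambda>a. if a \<in> W then f a else 0) \<in> bdd_funcs W N"
    and "dnorm W N (\<lambda>a. if a \<in> W then f a else 0) \<le> dnorm S N f"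
proof -
  have bound: "\<bar>(if a \<in> W then f a else 0)\<bar> \<le> dnorm S N f * N a" if "a \<in> W" for a
    using that W(2) dnorm_bound[OF N f] by auto
  show "(\<lambda>a. if a \<in> W then f a else 0) \<in> bdd_funcs W N"
  proof (rule bdd_funcsI[OF _ _ bound])
    show "(if a + b \<in> W then f (a + b) else 0) = (if a \<in> W then f a else 0) + (if b \<in> W then f b else 0)"
      if "a \<in> W" "b \<in> W" for a b
      using that subspace_add[OF W(1) that] bdd_funcs_add[OF f] W(2) by (simp add: subset_eq)
    show "(if r *\<^sub>R a \<in> W then f (r *\<^sub>R a) else 0) = r * (if a \<in> W then f a else 0)"
      if "a \<in> W" for r a
      using that subspace_scale[OF W(1) that] bdd_funcs_scale[OF f] W(2) by (simp add: subset_eq)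
  qed auto
  show "dnorm W N (\<lambda>a. if a \<in> W then f a else 0) \<le> dnorm S N f"
    using dnorm_least[OF seminorm_on_subspace[OF N W] dnorm_nonneg[OF N f] bound] .
qed

lemma abs_le_seminorm_if_le:
  assumes N: "seminorm_on V N" and h_scale: "\<And>r a. a \<in> V \<Longrightarrow> h (r *\<^sub>R a) = r * h a"
    and h_le: "\<And>a. a \<in> V \<Longrightarrow> h a \<le> D * N a" and a: "a \<in> V"
  shows "\<bar>h a\<bar> \<le> D * N a"
proof -
  have "- h a = h ((-1) *\<^sub>R a)"
    using h_scale[OF a, of "-1"] by simp
  also have "\<dots> \<le> D * N a"
    using h_le[OF subspace_scale[OF seminorm_onD(1)[OF N] a, of "-1"]] seminorm_onD(4)[OF N a, of "-1"]
    by simp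
  finally show ?thesis
    using h_le[OF a] by simp
qed

lemma bdd_funcs_extension:
  assumes N: "seminorm_on V N" and W: "subspace W" "W \<subseteq> V" and g: "g \<in> bdd_funcs W N"
  obtains h where "h \<in> bdd_funcs V N" and "\<And>a. a \<in> W \<Longrightarrow> h a = g a"
    and "dnorm V N h \<le> dnorm W N g"
proof -
  have NW: "seminorm_on W N"
    by (rule seminorm_on_subspace[OF N W])
  define D where "D = dnorm W N g"
  have D: "0 \<le> D"
    unfolding D_def by (rule dnorm_nonneg[OF NW g])
  have V: "subspace V"
    by (rule seminorm_onD(1)[OF N])
  obtain h0 where h0_add: "\<And>a b. a \<in> V \<Longrightarrow> b \<in> V \<Longrightarrow> h0 (a + b) = h0 a + h0 b"
    and h0_scale: "\<And>r a. a \<in> V \<Longrightarrow> h0 (r *\<^sub>R a) = r * h0 a"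
    and h0_g: "\<And>a. a \<in> W \<Longrightarrow> h0 a = g a" and h0_le: "\<And>a. a \<in> V \<Longrightarrow> h0 a \<le> D * N a"
  proof (rule hahn_banach_sublinear[OF V W, where p = "\<lambda>a. D * N a" and g = g])
    show "D * N (a + b) \<le> D * N a + D * N b" if "a \<in> V" "b \<in> V" for a b
      using seminorm_onD(3)[OF N that] D by (simp add: mult_left_mono flip: distrib_left)
    show "D * N (r *\<^sub>R a) = r * (D * N a)" if "a \<in> V" "0 < r" for r a
      using seminorm_onD(4)[OF N that(1)] that(2) by simp
    show "g (a + b) = g a + g b" if "a \<in> W" "b \<in> W" for a b
      using bdd_funcs_add[OF g that] .
    show "g (r *\<^sub>R a) = r * g a" if "a \<in> W" for r a
      using bdd_funcs_scale[OF g that] .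
    show "g a \<le> D * N a" if "a \<in> W" for a
      using dnorm_bound[OF NW g that] by (simp add: D_def)
  qed (use W in auto)
  define h where "h a = (if a \<in> V then h0 a else 0)" for a
  have bound: "\<bar>h a\<bar> \<le> D * N a" if "a \<in> V" for a
    using abs_le_seminorm_if_le[OF N h0_scale h0_le that] that by (simp add: h_def)
  have "h \<in> bdd_funcs V N"
  proof (rule bdd_funcsI[OF _ _ bound])
    show "h (a + b) = h a + h b" if "a \<in> V" "b \<in> V" for a b
      using that subspace_add[OF V] h0_add by (simp add: h_def)
    show "h (r *\<^sub>R a) = r * h a" if "a \<in> V" for r a
      using that subspace_scale[OF V] h0_scale by (simp add: h_def)
    show "h a = 0" if "a \<notin> V" for a
      using that by (simp add: h_def)
  qed
  moreover have "h a = g a" if "a \<in> W" for a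
    using that W(2) h0_g by (auto simp: h_def)
  moreover have "dnorm V N h \<le> dnorm W N g"
    using dnorm_least[OF N D bound] by (simp add: D_def)
  ultimately show thesis
    using that by blast
qed

lemma fs_isomorphic_restriction:
  assumes N: "seminorm_on S N" and W: "subspace W" "W \<subseteq> S" and A: "A \<subseteq> bdd_funcs S N"
    and inj: "\<And>f g. f \<in> A \<Longrightarrow> g \<in> A \<Longrightarrow> (\<And>a. a \<in> W \<Longrightarrow> f a = g a) \<Longrightarrow> f = g"
    and surj: "\<And>g. g \<in> bdd_funcs W N \<Longrightarrow> \<exists>f\<in>A. (\<forall>a\<in>W. f a = g a) \<and> dnorm S N f \<le> K * dnorm W N g"
  shows "fs_isomorphic A (dnorm S N) (bdd_funcs W N) (dnorm W N)"
proof -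
  define T where "T f = (\<lambda>a. if a \<in> W then f a else 0)" for f :: "(nat \<Rightarrow> real) \<Rightarrow> real"
  define K' where "K' = max K 1"
  have T_eq: "T f = T g \<longleftrightarrow> (\<forall>a\<in>W. f a = g a)" for f g
    by (auto simp: T_def fun_eq_iff)
  have T_bdd: "T f \<in> bdd_funcs W N" and T_le: "dnorm W N (T f) \<le> dnorm S N f" if "f \<in> A" for f
    using restrict_bdd_funcs[OF N W] that A unfolding T_def by blast+
  have "T ` A = bdd_funcs W N"
  proof
    show "bdd_funcs W N \<subseteq> T ` A"
    proof
      fix g assume g: "g \<in> bdd_funcs W N"
      then obtain f where "f \<in> A" "\<forall>a\<in>W. f a = g a"
        using surj by blast
      moreover have "T g = g"
        using bdd_funcs_outside[OF g] by (auto simp: T_def)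
      ultimately have "T f = g"
        using T_eq by metis
      then show "g \<in> T ` A"
        using \<open>f \<in> A\<close> by blast
    qed
  qed (use T_bdd in blast)
  moreover have "inj_on T A"
    using inj T_eq by (auto intro: inj_onI)
  moreover have "(1 / K') * dnorm S N f \<le> dnorm W N (T f)" if f: "f \<in> A" for f
  proof -
    obtain f' where f': "f' \<in> A" "\<forall>a\<in>W. f' a = T f a" "dnorm S N f' \<le> K * dnorm W N (T f)"
      using surj[OF T_bdd[OF f]] by blast
    have "f' = f"
      using inj[OF f'(1) f] f'(2) by (simp add: T_def)
    moreover have "K * dnorm W N (T f) \<le> K' * dnorm W N (T f)"
      using dnorm_nonneg[OF seminorm_on_subspace[OF N W] T_bdd[OF f]]
      by (intro mult_right_mono) (auto simp: K'_def)
    ultimately show ?thesis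
      using f'(3) by (simp add: K'_def field_simps)
  qed
  moreover have "0 < 1 / K'"
    by (simp add: K'_def)
  ultimately have "\<exists>c C. 0 < c \<and> (\<forall>f\<in>A. c * dnorm S N f \<le> dnorm W N (T f) \<and> dnorm W N (T f) \<le> C * dnorm S N f)"
    using T_le by (metis mult_1)
  moreover have "T (\<lambda>a. f a + g a) = (\<lambda>a. T f a + T g a)" "T (\<lambda>a. r * f a) = (\<lambda>a. r * T f a)" for f g r
    by (simp_all add: T_def fun_eq_iff)
  ultimately show ?thesis
    unfolding fs_isomorphic_def using \<open>T ` A = bdd_funcs W N\<close> \<open>inj_on T A\<close> by blast
qed

section \<open>The space Z\<close>

(* Scaling the k-th coefficient by t is the convex combination (1 + t)/2 id + (1 - t)/2 flip_k. *)
lemma one_unconditional_scale_coordinate: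
  assumes unc: "one_unconditional u" and t: "\<bar>t\<bar> \<le> 1"
  shows "norm (\<Sum>i<n. (if i = k then t * b i else b i) *\<^sub>R u i) \<le> norm (\<Sum>i<n. b i *\<^sub>R u i)"
proof -
  define \<epsilon> where "\<epsilon> i = (if i = k then -1 else (1::real))" for i
  define v where "v = (\<Sum>i<n. b i *\<^sub>R u i)"
  have flip: "norm (\<Sum>i<n. (\<epsilon> i * b i) *\<^sub>R u i) = norm v"
    using unc unfolding one_unconditional_def \<epsilon>_def v_def by auto
  have coeff: "(if i = k then t * b i else b i) = (1 + t) / 2 * b i + (1 - t) / 2 * (\<epsilon> i * b i)" for i
    by (simp add: \<epsilon>_def field_simps)
  have "(\<Sum>i<n. (if i = k then t * b i else b i) *\<^sub>R u i)
      = ((1 + t) / 2) *\<^sub>R v + ((1 - t) / 2) *\<^sub>R (\<Sum>i<n. (\<epsilon> i * b i) *\<^sub>R u i)"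
    by (simp only: coeff) (simp add: v_def scaleR_add_left sum.distrib scaleR_sum_right)
  also have "norm \<dots> \<le> norm (((1 + t) / 2) *\<^sub>R v) + norm (((1 - t) / 2) *\<^sub>R (\<Sum>i<n. (\<epsilon> i * b i) *\<^sub>R u i))"
    by (rule norm_triangle_ineq)
  also have "\<dots> = (1 + t) / 2 * norm v + (1 - t) / 2 * norm v"
    using t flip by simp
  also have "\<dots> = norm v"
    by (simp add: field_simps)
  finally show ?thesis
    by (simp add: v_def)
qed

lemma one_unconditional_norm_mono:
  assumes unc: "one_unconditional u" and le: "\<And>i. i < n \<Longrightarrow> \<bar>a i\<bar> \<le> \<bar>b i\<bar>"
  shows "norm (\<Sum>i<n. a i *\<^sub>R u i) \<le> norm (\<Sum>i<n. b i *\<^sub>R u i)"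
proof -
  define c where "c j i = (if i < j then a i else b i)" for j i
  have "norm (\<Sum>i<n. c j i *\<^sub>R u i) \<le> norm (\<Sum>i<n. b i *\<^sub>R u i)" for j
  proof (induction j)
    case 0
    then show ?case by (simp add: c_def)
  next
    case (Suc j)
    show ?case
    proof (cases "j < n \<and> b j \<noteq> 0")
      case True
      have ratio: "\<bar>a j / b j\<bar> \<le> 1"
        using le True by (simp add: abs_divide)
      moreover have "(\<Sum>i<n. c (Suc j) i *\<^sub>R u i) = (\<Sum>i<n. (if i = j then a j / b j * c j i else c j i) *\<^sub>R u i)"
        using True by (intro sum.cong) (auto simp: c_def)
      ultimately show ?thesis
        using order_trans[OF one_unconditional_scale_coordinate[OF unc ratio] Suc.IH] by simp
    next
      case False
      then have "(\<Sum>i<n. c (Suc j) i *\<^sub>R u i) = (\<Sum>i<n. c j i *\<^sub>R u i)"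
        using le[of j] by (intro sum.cong) (auto simp: c_def less_Suc_eq)
      then show ?thesis
        using Suc.IH by simp
    qed
  qed
  moreover have "(\<Sum>i<n. c n i *\<^sub>R u i) = (\<Sum>i<n. a i *\<^sub>R u i)"
    by (rule sum.cong) (auto simp: c_def)
  ultimately show ?thesis
    by metis
qed

lemma norm_sum_list_le: "norm (\<Sum>p\<leftarrow>l. f p) \<le> (\<Sum>p\<leftarrow>l. norm (f p))"
  by (induction l) (auto intro: order_trans[OF norm_triangle_ineq])

lemma pair_list_bounded: "\<exists>M. \<forall>p\<in>set (l :: (nat \<times> nat) list). fst p < M \<and> snd p < M"
proof -
  have "\<forall>p\<in>set l. fst p < Suc (sum_list (map fst l)) \<and> snd p < Suc (sum_list (map snd l))"
    by (auto simp: le_imp_less_Suc member_le_sum_list)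
  then show ?thesis
    by (metis max.strict_coboundedI1 max.strict_coboundedI2)
qed

lemma sum_list_collect_coefficients:
  fixes u :: "nat \<Rightarrow> 'b::real_vector"
  assumes "\<forall>p\<in>set l. fst p < M"
  shows "(\<Sum>p\<leftarrow>l. c p *\<^sub>R u (fst p)) = (\<Sum>i<M. (\<Sum>p\<leftarrow>l. if fst p = i then c p else 0) *\<^sub>R u i)"
  using assms
proof (induction l)
  case (Cons p l)
  have "(\<Sum>i<M. (if fst p = i then c p else 0) *\<^sub>R u i) = c p *\<^sub>R u (fst p)"
    using Cons.prems by (simp add: if_distrib[of "\<lambda>t. t *\<^sub>R u _"] sum.delta cong: if_cong)
  then show ?case
    using Cons by (simp add: scaleR_add_left sum.distrib)
qed simp

lemma disjoint_blocks_sum_le: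
  fixes f :: "nat \<Rightarrow> real"
  assumes "\<And>i. 0 \<le> f i" and "sorted_wrt (\<lambda>p q. snd p < fst q) l"
    and "\<forall>p\<in>set l. m \<le> fst p \<and> fst p \<le> snd p \<and> snd p < M"
  shows "(\<Sum>p\<leftarrow>l. \<Sum>i\<in>{fst p..snd p}. f i) \<le> (\<Sum>i\<in>{m..<M}. f i)"
  using assms(2,3)
proof (induction l arbitrary: m)
  case Nil
  then show ?case
    using assms(1) by (simp add: sum_nonneg)
next
  case (Cons p l)
  have p: "m \<le> fst p" "fst p \<le> snd p" "snd p < M"
    using Cons.prems by auto
  have "(\<Sum>i\<in>{fst p..snd p}. f i) \<le> (\<Sum>i\<in>{m..<Suc (snd p)}. f i)"
    using p assms(1) by (intro sum_mono2) auto
  moreover have "(\<Sum>q\<leftarrow>l. \<Sum>i\<in>{fst q..snd q}. f i) \<le> (\<Sum>i\<in>{Suc (snd p)..<M}. f i)"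
    using Cons.prems by (intro Cons.IH) auto
  moreover have "(\<Sum>i\<in>{m..<Suc (snd p)}. f i) + (\<Sum>i\<in>{Suc (snd p)..<M}. f i) = (\<Sum>i\<in>{m..<M}. f i)"
    using p by (intro sum.atLeastLessThan_concat) auto
  ultimately show ?case
    by simp
qed

definition block_norm :: "(nat \<Rightarrow> 'a::real_normed_vector) \<Rightarrow> (nat \<Rightarrow> real) \<Rightarrow> nat \<times> nat \<Rightarrow> real" where
  "block_norm x a p = norm (\<Sum>i\<in>{fst p..snd p}. a i *\<^sub>R x i)"

definition block_coeff ::
    "(nat \<Rightarrow> 'a::real_normed_vector) \<Rightarrow> (nat \<Rightarrow> real) \<Rightarrow> (nat \<times> nat) list \<Rightarrow> nat \<Rightarrow> real" where
  "block_coeff x a l i = (\<Sum>p\<leftarrow>l. if fst p = i then block_norm x a p else 0)"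

lemma zval_block_coeff:
  assumes "\<forall>p\<in>set l. fst p < M"
  shows "zval x u a l = norm (\<Sum>i<M. block_coeff x a l i *\<^sub>R u i)"
  unfolding zval_def block_coeff_def block_norm_def[symmetric]
  using sum_list_collect_coefficients[OF assms, of "block_norm x a" u] by simp

lemma block_norm_add: "block_norm x (a + b) p \<le> block_norm x a p + block_norm x b p"
  unfolding block_norm_def by (simp add: scaleR_add_left sum.distrib norm_triangle_ineq)

lemma block_norm_scale: "block_norm x (r *\<^sub>R a) p = \<bar>r\<bar> * block_norm x a p"
proof -
  have "(\<Sum>i\<in>{fst p..snd p}. (r *\<^sub>R a) i *\<^sub>R x i) = r *\<^sub>R (\<Sum>i\<in>{fst p..snd p}. a i *\<^sub>R x i)"
    by (simp add: scaleR_sum_right)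
  then show ?thesis
    by (simp add: block_norm_def)
qed

lemma block_coeff_nonneg: "0 \<le> block_coeff x a l i"
  unfolding block_coeff_def block_norm_def by (induction l) auto

lemma block_coeff_add: "block_coeff x (a + b) l i \<le> block_coeff x a l i + block_coeff x b l i"
  unfolding block_coeff_def sum_list_addf[symmetric] by (rule sum_list_mono) (simp add: block_norm_add)

lemma block_coeff_scale: "block_coeff x (r *\<^sub>R a) l i = \<bar>r\<bar> * block_coeff x a l i"
  unfolding block_coeff_def by (induction l) (auto simp: block_norm_scale algebra_simps)

lemma zval_cong:
  assumes "\<And>p i. p \<in> set l \<Longrightarrow> fst p \<le> i \<Longrightarrow> i \<le> snd p \<Longrightarrow> a i = b i"
  shows "zval x u a l = zval x u b l"
  unfolding zval_def using assms by (intro arg_cong[where f = "\<lambda>v. norm (sum_list v)"] map_cong sum.cong) auto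

(* znorm is a Sup and hence a junk value unless the block values of a are bounded. *)
definition zbounded :: "(nat \<Rightarrow> 'a::real_normed_vector) \<Rightarrow> (nat \<Rightarrow> 'b::real_normed_vector) \<Rightarrow> (nat \<Rightarrow> real) \<Rightarrow> bool" where
  "zbounded x u a \<longleftrightarrow> bdd_above {zval x u a l | l. blocks l}"

definition interval_part :: "nat \<Rightarrow> nat \<Rightarrow> (nat \<Rightarrow> real) \<Rightarrow> nat \<Rightarrow> real" where
  "interval_part m n a = (\<lambda>i. if m \<le> i \<and> i < n then a i else 0)"

lemma Zsp_iff_interval_part:
  "a \<in> Zsp x u \<longleftrightarrow> (\<forall>\<epsilon>>0. \<exists>N. \<forall>m n. N \<le> m \<longrightarrow> m \<le> n \<longrightarrow> znorm x u (interval_part m n a) < \<epsilon>)"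
  by (simp add: Zsp_def interval_part_def)

lemma interval_part_add: "interval_part m n (a + b) = interval_part m n a + interval_part m n b"
  by (simp add: interval_part_def fun_eq_iff)

lemma interval_part_scale: "interval_part m n (r *\<^sub>R a) = r *\<^sub>R interval_part m n a"
  by (simp add: interval_part_def fun_eq_iff)

lemma blocks_single: "m \<le> n \<Longrightarrow> blocks [(m, n)]"
  by (simp add: blocks_def)

lemma znorm_upper: "zbounded x u a \<Longrightarrow> blocks l \<Longrightarrow> zval x u a l \<le> znorm x u a"
  unfolding znorm_def zbounded_def by (rule cSup_upper) auto

lemma znorm_least:
  assumes "\<And>l. blocks l \<Longrightarrow> zval x u a l \<le> B"
  shows "zbounded x u a" and "znorm x u a \<le> B"
proof -
  show "zbounded x u a"
    unfolding zbounded_def bdd_above_def using assms by blast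
  have "{zval x u a l | l. blocks l} \<noteq> {}"
    using blocks_single[of 0 0] by blast
  then show "znorm x u a \<le> B"
    unfolding znorm_def using assms by (intro cSup_least) auto
qed

lemma znorm_nonneg: "zbounded x u a \<Longrightarrow> 0 \<le> znorm x u a"
  using znorm_upper[OF _ blocks_single[of 0 0]] norm_ge_zero order_trans unfolding zval_def by blast

locale block_norm_space =
  fixes x :: "nat \<Rightarrow> 'a::banach" and u :: "nat \<Rightarrow> 'b::real_normed_vector"
  assumes norm_x: "\<And>n. norm (x n) = 1" and norm_u: "\<And>n. norm (u n) = 1"
    and unconditional_u: "one_unconditional u"
begin

lemma zval_triangle: "zval x u (a + b) l \<le> zval x u a l + zval x u b l"
proof -
  obtain M where M: "\<forall>p\<in>set l. fst p < M"
    using pair_list_bounded by blast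
  have "zval x u (a + b) l = norm (\<Sum>i<M. block_coeff x (a + b) l i *\<^sub>R u i)"
    by (rule zval_block_coeff[OF M])
  also have "\<dots> \<le> norm (\<Sum>i<M. (block_coeff x a l i + block_coeff x b l i) *\<^sub>R u i)"
    by (intro one_unconditional_norm_mono[OF unconditional_u])
      (simp add: abs_of_nonneg block_coeff_nonneg block_coeff_add)
  also have "\<dots> \<le> norm (\<Sum>i<M. block_coeff x a l i *\<^sub>R u i) + norm (\<Sum>i<M. block_coeff x b l i *\<^sub>R u i)"
    by (simp add: scaleR_add_left sum.distrib norm_triangle_ineq)
  also have "\<dots> = zval x u a l + zval x u b l"
    by (simp only: zval_block_coeff[OF M])
  finally show ?thesis .
qed

lemma zval_scale: "zval x u (r *\<^sub>R a) l = \<bar>r\<bar> * zval x u a l"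
proof -
  obtain M where M: "\<forall>p\<in>set l. fst p < M"
    using pair_list_bounded by blast
  have "zval x u (r *\<^sub>R a) l = norm (\<bar>r\<bar> *\<^sub>R (\<Sum>i<M. block_coeff x a l i *\<^sub>R u i))"
    by (simp add: zval_block_coeff[OF M] block_coeff_scale scaleR_sum_right)
  then show ?thesis
    using zval_block_coeff[OF M, of x u a] by simp
qed

lemma zval_le_sum_abs:
  assumes l: "blocks l" and M: "\<forall>p\<in>set l. snd p < M"
  shows "zval x u a l \<le> (\<Sum>i<M. \<bar>a i\<bar>)"
proof -
  have "zval x u a l \<le> (\<Sum>p\<leftarrow>l. norm (block_norm x a p *\<^sub>R u (fst p)))"
    unfolding zval_def block_norm_def[symmetric] by (rule norm_sum_list_le)
  also have "\<dots> \<le> (\<Sum>p\<leftarrow>l. \<Sum>i\<in>{fst p..snd p}. \<bar>a i\<bar>)"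
  proof (rule sum_list_mono)
    fix p
    have "block_norm x a p \<le> (\<Sum>i\<in>{fst p..snd p}. norm (a i *\<^sub>R x i))"
      unfolding block_norm_def by (rule norm_sum)
    then show "norm (block_norm x a p *\<^sub>R u (fst p)) \<le> (\<Sum>i\<in>{fst p..snd p}. \<bar>a i\<bar>)"
      using norm_x norm_u by (simp add: block_norm_def)
  qed
  also have "\<dots> \<le> (\<Sum>i\<in>{0..<M}. \<bar>a i\<bar>)"
    using l M by (intro disjoint_blocks_sum_le) (auto simp: blocks_def)
  finally show ?thesis
    by (simp add: atLeast0LessThan)
qed

lemma znorm_le_suminf_abs:
  assumes sum: "summable (\<lambda>i. \<bar>a i\<bar>)"
  shows "zbounded x u a" and "znorm x u a \<le> (\<Sum>i. \<bar>a i\<bar>)"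
proof -
  have "zval x u a l \<le> (\<Sum>i. \<bar>a i\<bar>)" if l: "blocks l" for l
  proof -
    obtain M where "\<forall>p\<in>set l. fst p < M \<and> snd p < M"
      using pair_list_bounded by blast
    then have "zval x u a l \<le> (\<Sum>i<M. \<bar>a i\<bar>)"
      using zval_le_sum_abs[OF l] by blast
    also have "\<dots> \<le> (\<Sum>i. \<bar>a i\<bar>)"
      using sum by (intro sum_le_suminf) auto
    finally show ?thesis .
  qed
  then show "zbounded x u a" and "znorm x u a \<le> (\<Sum>i. \<bar>a i\<bar>)"
    using znorm_least by blast+
qed

lemma interval_part_abs_sums: "(\<lambda>i. \<bar>interval_part m n a i\<bar>) sums (\<Sum>i\<in>{m..<n}. \<bar>a i\<bar>)"
proof -
  have "(\<lambda>i. \<bar>interval_part m n a i\<bar>) sums (\<Sum>i\<in>{m..<n}. \<bar>interval_part m n a i\<bar>)"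
    by (rule sums_finite) (auto simp: interval_part_def)
  then show ?thesis
    by (simp add: interval_part_def)
qed

lemma interval_part_zbounded: "zbounded x u (interval_part m n a)"
  by (rule znorm_le_suminf_abs(1)[OF sums_summable[OF interval_part_abs_sums]])

lemma znorm_interval_part_le: "znorm x u (interval_part m n a) \<le> (\<Sum>i\<in>{m..<n}. \<bar>a i\<bar>)"
  using znorm_le_suminf_abs(2)[OF sums_summable[OF interval_part_abs_sums]] sums_unique[OF interval_part_abs_sums]
  by simp

lemma znorm_triangle:
  assumes "zbounded x u a" "zbounded x u b"
  shows "zbounded x u (a + b)" and "znorm x u (a + b) \<le> znorm x u a + znorm x u b"
proof -
  have "zval x u (a + b) l \<le> znorm x u a + znorm x u b" if "blocks l" for l
    using zval_triangle[of a b l] znorm_upper[OF assms(1) that] znorm_upper[OF assms(2) that] by linarith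
  then show "zbounded x u (a + b)" and "znorm x u (a + b) \<le> znorm x u a + znorm x u b"
    by (fact znorm_least(1), fact znorm_least(2))
qed

lemma znorm_scale:
  assumes a: "zbounded x u a"
  shows "zbounded x u (r *\<^sub>R a)" and "znorm x u (r *\<^sub>R a) = \<bar>r\<bar> * znorm x u a"
proof -
  have bound: "zval x u (r *\<^sub>R a) l \<le> \<bar>r\<bar> * znorm x u a" if "blocks l" for l
    using zval_scale znorm_upper[OF a that] by (simp add: mult_left_mono)
  then show ra: "zbounded x u (r *\<^sub>R a)"
    by (rule znorm_least)
  show "znorm x u (r *\<^sub>R a) = \<bar>r\<bar> * znorm x u a"
  proof (cases "r = 0")
    case True
    then show ?thesis
      using znorm_least(2)[OF bound] znorm_nonneg[OF ra] by simp
  next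
    case False
    have "zval x u a l \<le> znorm x u (r *\<^sub>R a) / \<bar>r\<bar>" if "blocks l" for l
      using znorm_upper[OF ra that] zval_scale[of r a l] False by (simp add: field_simps)
    then have "znorm x u a \<le> znorm x u (r *\<^sub>R a) / \<bar>r\<bar>"
      by (rule znorm_least(2))
    then have "\<bar>r\<bar> * znorm x u a \<le> znorm x u (r *\<^sub>R a)"
      using False by (simp add: field_simps)
    then show ?thesis
      using znorm_least(2)[OF bound] by simp
  qed
qed

lemma norm_interval_le_znorm:
  assumes "zbounded x u a" "m \<le> n"
  shows "norm (\<Sum>i\<in>{m..n}. a i *\<^sub>R x i) \<le> znorm x u a"
  using znorm_upper[OF assms(1) blocks_single[OF assms(2)]] norm_u by (simp add: zval_def)

lemma abs_le_znorm: "zbounded x u a \<Longrightarrow> \<bar>a i\<bar> \<le> znorm x u a"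
  using norm_interval_le_znorm[of a i i] norm_x by simp

lemma Zsp_zbounded:
  assumes a: "a \<in> Zsp x u"
  shows "zbounded x u a"
proof -
  obtain N where N: "\<And>m n. N \<le> m \<Longrightarrow> m \<le> n \<Longrightarrow> znorm x u (interval_part m n a) < 1"
    using a unfolding Zsp_iff_interval_part by (meson zero_less_one)
  have "zval x u a l \<le> (\<Sum>i<N. \<bar>a i\<bar>) + 1" if l: "blocks l" for l
  proof -
    obtain M0 where M0: "\<forall>p\<in>set l. fst p < M0 \<and> snd p < M0"
      using pair_list_bounded by blast
    define M where "M = max M0 N"
    have "zval x u a l = zval x u (interval_part 0 N a + interval_part N M a) l"
      using M0 by (intro zval_cong) (force simp: interval_part_def M_def)
    also have "\<dots> \<le> zval x u (interval_part 0 N a) l + zval x u (interval_part N M a) l"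
      by (rule zval_triangle)
    also have "\<dots> \<le> (\<Sum>i<N. \<bar>a i\<bar>) + 1"
    proof (rule add_mono)
      show "zval x u (interval_part 0 N a) l \<le> (\<Sum>i<N. \<bar>a i\<bar>)"
        using order_trans[OF znorm_upper[OF interval_part_zbounded l] znorm_interval_part_le[of 0 N a]]
        by (simp add: atLeast0LessThan)
      show "zval x u (interval_part N M a) l \<le> 1"
        using znorm_upper[OF interval_part_zbounded l, of N M a] N[of N M] by (simp add: M_def)
    qed
    finally show ?thesis .
  qed
  then show ?thesis
    by (rule znorm_least)
qed

lemma summable_abs_in_Zsp:
  assumes sum: "summable (\<lambda>i. \<bar>a i\<bar>)"
  shows "a \<in> Zsp x u"
  unfolding Zsp_iff_interval_part
proof (intro allI impI)
  fix \<epsilon> :: real assume "\<epsilon> > 0"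
  then obtain N where N: "\<And>m n. N \<le> m \<Longrightarrow> norm (\<Sum>i\<in>{m..<n}. \<bar>a i\<bar>) < \<epsilon>"
    using sum unfolding summable_Cauchy by blast
  have "znorm x u (interval_part m n a) < \<epsilon>" if "N \<le> m" for m n
    using znorm_interval_part_le[of m n a] N[OF that, of n] by (simp add: sum_nonneg)
  then show "\<exists>N. \<forall>m n. N \<le> m \<longrightarrow> m \<le> n \<longrightarrow> znorm x u (interval_part m n a) < \<epsilon>"
    by blast
qed

lemma Zsp_add:
  assumes a: "a \<in> Zsp x u" and b: "b \<in> Zsp x u"
  shows "a + b \<in> Zsp x u"
  unfolding Zsp_iff_interval_part
proof (intro allI impI)
  fix \<epsilon> :: real assume "\<epsilon> > 0"
  then obtain Na Nb where Na: "\<And>m n. Na \<le> m \<Longrightarrow> m \<le> n \<Longrightarrow> znorm x u (interval_part m n a) < \<epsilon> / 2"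
    and Nb: "\<And>m n. Nb \<le> m \<Longrightarrow> m \<le> n \<Longrightarrow> znorm x u (interval_part m n b) < \<epsilon> / 2"
    using a b unfolding Zsp_iff_interval_part by (meson half_gt_zero)
  have "znorm x u (interval_part m n (a + b)) < \<epsilon>" if "max Na Nb \<le> m" "m \<le> n" for m n
    using znorm_triangle(2)[OF interval_part_zbounded interval_part_zbounded, of m n a m n b] Na[of m n] Nb[of m n] that
    by (simp add: interval_part_add)
  then show "\<exists>N. \<forall>m n. N \<le> m \<longrightarrow> m \<le> n \<longrightarrow> znorm x u (interval_part m n (a + b)) < \<epsilon>"
    by blast
qed

lemma Zsp_scale:
  assumes a: "a \<in> Zsp x u"
  shows "c *\<^sub>R a \<in> Zsp x u"
  unfolding Zsp_iff_interval_part
proof (intro allI impI)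
  fix \<epsilon> :: real assume "\<epsilon> > 0"
  then have "\<epsilon> / (\<bar>c\<bar> + 1) > 0"
    by simp
  then obtain N where N: "\<And>m n. N \<le> m \<Longrightarrow> m \<le> n \<Longrightarrow> znorm x u (interval_part m n a) < \<epsilon> / (\<bar>c\<bar> + 1)"
    using a unfolding Zsp_iff_interval_part by blast
  have "znorm x u (interval_part m n (c *\<^sub>R a)) < \<epsilon>" if "N \<le> m" "m \<le> n" for m n
  proof -
    have "znorm x u (interval_part m n (c *\<^sub>R a)) = \<bar>c\<bar> * znorm x u (interval_part m n a)"
      by (simp add: interval_part_scale znorm_scale(2)[OF interval_part_zbounded])
    also have "\<dots> \<le> (\<bar>c\<bar> + 1) * znorm x u (interval_part m n a)"
      using znorm_nonneg[OF interval_part_zbounded] by (simp add: mult_right_mono)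
    also have "\<dots> < (\<bar>c\<bar> + 1) * (\<epsilon> / (\<bar>c\<bar> + 1))"
      using N[OF that] by (intro mult_strict_left_mono) auto
    finally show ?thesis
      by simp
  qed
  then show "\<exists>N. \<forall>m n. N \<le> m \<longrightarrow> m \<le> n \<longrightarrow> znorm x u (interval_part m n (c *\<^sub>R a)) < \<epsilon>"
    by blast
qed

lemma seminorm_on_Zsp: "seminorm_on (Zsp x u) (znorm x u)"
proof -
  have "(0 :: nat \<Rightarrow> real) \<in> Zsp x u"
    using summable_abs_in_Zsp[of 0] by simp
  then have "subspace (Zsp x u)"
    unfolding subspace_def using Zsp_add Zsp_scale by blast
  then show ?thesis
    unfolding seminorm_on_def
    using znorm_nonneg znorm_triangle(2) znorm_scale(2) Zsp_zbounded by blast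
qed

lemma Zsp_summable:
  assumes a: "a \<in> Zsp x u"
  shows "summable (\<lambda>j. a j *\<^sub>R x j)"
  unfolding summable_Cauchy
proof (intro allI impI)
  fix \<epsilon> :: real assume "\<epsilon> > 0"
  then obtain N where N: "\<And>m n. N \<le> m \<Longrightarrow> m \<le> n \<Longrightarrow> znorm x u (interval_part m n a) < \<epsilon>"
    using a unfolding Zsp_iff_interval_part by blast
  have "norm (\<Sum>j\<in>{m..<n}. a j *\<^sub>R x j) < \<epsilon>" if "N \<le> m" for m n
  proof (cases "m < n")
    case True
    have "(\<Sum>j\<in>{m..<n}. a j *\<^sub>R x j) = (\<Sum>j\<in>{m..n - 1}. interval_part m n a j *\<^sub>R x j)"
      using True by (intro sum.cong) (auto simp: interval_part_def)
    then have "norm (\<Sum>j\<in>{m..<n}. a j *\<^sub>R x j) \<le> znorm x u (interval_part m n a)"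
      using norm_interval_le_znorm[OF interval_part_zbounded, of m "n - 1" m n a] True by simp
    also have "\<dots> < \<epsilon>"
      using N that True by simp
    finally show ?thesis .
  qed (use \<open>\<epsilon> > 0\<close> in simp)
  then show "\<exists>N. \<forall>m\<ge>N. \<forall>n. norm (\<Sum>j\<in>{m..<n}. a j *\<^sub>R x j) < \<epsilon>"
    by blast
qed

lemma Qmap_add: "a \<in> Zsp x u \<Longrightarrow> b \<in> Zsp x u \<Longrightarrow> Qmap x (a + b) = Qmap x a + Qmap x b"
  unfolding Qmap_def by (simp add: scaleR_add_left suminf_add Zsp_summable)

lemma Qmap_scale: "a \<in> Zsp x u \<Longrightarrow> Qmap x (c *\<^sub>R a) = c *\<^sub>R Qmap x a"
  unfolding Qmap_def using suminf_scaleR_right[OF Zsp_summable, of a c] by simp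

lemma subspace_Wsp: "subspace (Wsp x u)"
proof -
  have "Wsp x u = Zsp x u \<inter> {a. Qmap x a = 0}"
    by (auto simp: Wsp_def)
  moreover have "subspace (Zsp x u \<inter> {a. Qmap x a = 0})"
    using seminorm_onD(1)[OF seminorm_on_Zsp] Qmap_add Qmap_scale
    unfolding subspace_def by (auto simp: Qmap_def)
  ultimately show ?thesis
    by simp
qed

lemma Wsp_subset_Zsp: "Wsp x u \<subseteq> Zsp x u"
  by (auto simp: Wsp_def)

end

section \<open>Greedy expansion along a dense signed sequence\<close>

lemma line_avoids_zero:
  fixes v y :: "'a::real_normed_vector"
  assumes "v \<noteq> 0" and indep: "\<And>t. y \<noteq> t *\<^sub>R v"
  shows "v + t *\<^sub>R y \<noteq> 0"
proof
  assume sum0: "v + t *\<^sub>R y = 0"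
  then have "t \<noteq> 0"
    using assms(1) by auto
  have "y = (1 / t) *\<^sub>R (t *\<^sub>R y)"
    using \<open>t \<noteq> 0\<close> by simp
  also have "t *\<^sub>R y = - v"
    using sum0 by (simp add: eq_neg_iff_add_eq_0 add.commute)
  finally have "y = (- 1 / t) *\<^sub>R v"
    by simp
  then show False
    using indep by blast
qed

lemma norm_sgn_diff_le:
  fixes v b :: "'a::real_normed_vector"
  assumes v: "norm v = 1" and b: "b \<noteq> 0"
  shows "norm (sgn b - v) \<le> 2 * norm (b - v)"
proof -
  have "norm (sgn b - b) = norm ((1 / norm b - 1) *\<^sub>R b)"
    by (simp add: sgn_div_norm scaleR_diff_left divide_inverse_commute)
  also have "\<dots> = \<bar>(1 / norm b - 1) * norm b\<bar>"
    by (simp add: abs_mult)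
  also have "\<dots> = \<bar>1 - norm b\<bar>"
    using b by (simp add: algebra_simps)
  also have "\<dots> \<le> norm (b - v)"
    using v norm_triangle_ineq3[of b v] by (simp add: abs_minus_commute)
  finally show ?thesis
    using norm_triangle_ineq[of "sgn b - b" "b - v"] by simp
qed

lemma inj_sgn_line:
  fixes v y :: "'a::real_normed_vector"
  assumes v: "v \<noteq> 0" and indep: "\<And>t. y \<noteq> t *\<^sub>R v"
  shows "inj (\<lambda>t. sgn (v + t *\<^sub>R y))"
proof (rule injI)
  fix t t' assume eq: "sgn (v + t *\<^sub>R y) = sgn (v + t' *\<^sub>R y)"
  define k where "k = norm (v + t *\<^sub>R y) / norm (v + t' *\<^sub>R y)"
  have "v + t *\<^sub>R y = norm (v + t *\<^sub>R y) *\<^sub>R sgn (v + t *\<^sub>R y)"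
    using line_avoids_zero[OF v indep, of t] by (simp add: sgn_div_norm)
  also have "\<dots> = k *\<^sub>R (v + t' *\<^sub>R y)"
    unfolding eq using line_avoids_zero[OF v indep, of t'] by (simp add: k_def sgn_div_norm divide_inverse)
  finally have lin: "(1 - k) *\<^sub>R v = (k * t' - t) *\<^sub>R y"
    by (simp add: algebra_simps)
  show "t = t'"
  proof (cases "k * t' - t = 0")
    case True
    then show ?thesis
      using lin v by auto
  next
    case False
    then have "y = (1 / (k * t' - t)) *\<^sub>R ((k * t' - t) *\<^sub>R y)"
      by simp
    also have "\<dots> = ((1 - k) / (k * t' - t)) *\<^sub>R v"
      by (simp only: lin[symmetric]) simp
    finally show ?thesis
      using indep by blast
  qed
qed

lemma infinite_unit_vectors_near:
  fixes v y :: "'a::real_normed_vector"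
  assumes v: "norm v = 1" and indep: "\<And>t. y \<noteq> t *\<^sub>R v" and e: "0 < e"
  shows "infinite {w. norm w = 1 \<and> norm (w - v) < e}"
proof -
  have "v \<noteq> 0"
    using v by auto
  define \<eta> where "\<eta> = e / (2 * (norm y + 1))"
  have ny: "0 < norm y + 1"
    using norm_ge_zero[of y] by linarith
  then have "\<eta> > 0"
    using e by (simp add: \<eta>_def)
  have "(\<lambda>t. sgn (v + t *\<^sub>R y)) ` {0<..<\<eta>} \<subseteq> {w. norm w = 1 \<and> norm (w - v) < e}"
  proof
    fix w assume "w \<in> (\<lambda>t. sgn (v + t *\<^sub>R y)) ` {0<..<\<eta>}"
    then obtain t where t: "0 < t" "t < \<eta>" and w: "w = sgn (v + t *\<^sub>R y)"
      by auto
    have "norm (sgn (v + t *\<^sub>R y) - v) \<le> 2 * norm ((v + t *\<^sub>R y) - v)"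
      by (rule norm_sgn_diff_le[OF v line_avoids_zero[OF \<open>v \<noteq> 0\<close> indep]])
    also have "\<dots> = 2 * (t * norm y)"
      using t by simp
    also have "\<dots> \<le> 2 * (t * (norm y + 1))"
      using t by simp
    also have "\<dots> < 2 * (\<eta> * (norm y + 1))"
      using t ny by (intro mult_strict_left_mono mult_strict_right_mono) auto
    also have "\<dots> = e"
      using ny by (simp add: \<eta>_def field_simps)
    finally show "w \<in> {w. norm w = 1 \<and> norm (w - v) < e}"
      using line_avoids_zero[OF \<open>v \<noteq> 0\<close> indep] by (simp add: w norm_sgn)
  qed
  moreover have "infinite ((\<lambda>t. sgn (v + t *\<^sub>R y)) ` {0<..<\<eta>})"
    using inj_sgn_line[OF \<open>v \<noteq> 0\<close> indep] \<open>\<eta> > 0\<close> by (simp add: finite_image_iff inj_on_subset)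
  ultimately show ?thesis
    using finite_subset by blast
qed

lemma unit_vector_near_outside_finite:
  fixes v y :: "'a::real_normed_vector"
  assumes v: "norm v = 1" and indep: "\<And>t. y \<noteq> t *\<^sub>R v" and e: "0 < e" and F: "finite F"
  obtains w where "norm w = 1" and "norm (w - v) < e" and "w \<notin> F"
proof -
  have "\<not> {w. norm w = 1 \<and> norm (w - v) < e} \<subseteq> F"
    using infinite_unit_vectors_near[OF v indep e] F finite_subset by blast
  then show thesis
    using that by blast
qed

lemma closure_approx_outside_finite:
  fixes w :: "'a::metric_space"
  assumes "w \<in> closure S" and "w \<notin> F" and "finite F" and "0 < e"
  obtains p where "p \<in> S" and "p \<notin> F" and "dist p w < e"
proof -
  have "open (- F)"
    using \<open>finite F\<close> by (simp add: finite_imp_closed open_Compl)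
  then obtain d where d: "d > 0" "ball w d \<subseteq> - F"
    using \<open>w \<notin> F\<close> open_contains_ball by blast
  have "0 < min d e"
    using d(1) \<open>0 < e\<close> by simp
  then obtain p where "p \<in> S" "dist p w < min d e"
    using assms(1) unfolding closure_approachable by blast
  moreover from this(2) have "p \<in> ball w d"
    by (simp add: dist_commute)
  then have "p \<notin> F"
    using d(2) by blast
  ultimately show thesis
    using that by simp
qed

(* The indices must exceed any given m. Unless X is one-dimensional, the unit vectors near v
   are infinitely many, so they avoid the finitely many \<plusminus>x n with n < m. *)
lemma signed_dense_tail_approx:
  fixes x :: "nat \<Rightarrow> 'a::real_normed_vector"
  assumes norm_x: "\<And>n. norm (x n) = 1"
    and dense: "sphere 0 1 \<subseteq> closure (range x \<union> range (\<lambda>n. - x n))"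
    and v: "norm v = 1" and e: "0 < e"
  shows "\<exists>n\<ge>m. \<exists>s. \<bar>s\<bar> = 1 \<and> norm (v - s *\<^sub>R x n) < e"
proof (cases "\<exists>y. \<forall>t. y \<noteq> t *\<^sub>R v")
  case False
  then obtain t where t: "x m = t *\<^sub>R v"
    by blast
  then have "\<bar>t\<bar> = 1"
    using norm_x[of m] v by simp
  then have "t * t = 1"
    using abs_mult_self_eq[of t] by simp
  then have "norm (v - t *\<^sub>R x m) < e"
    using e by (simp add: t)
  then show ?thesis
    using \<open>\<bar>t\<bar> = 1\<close> by blast
next
  case True
  then obtain y where y: "\<And>t. y \<noteq> t *\<^sub>R v"
    by blast
  define F where "F = x ` {..<m} \<union> (\<lambda>n. - x n) ` {..<m}"
  have "finite F"
    by (simp add: F_def)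
  then obtain w where w: "norm w = 1" "norm (w - v) < e / 2" "w \<notin> F"
    using unit_vector_near_outside_finite[OF v y, of "e / 2"] e by auto
  have "w \<in> closure (range x \<union> range (\<lambda>n. - x n))"
    using dense w(1) by auto
  moreover have "0 < e / 2 - norm (w - v)"
    using w(2) by simp
  ultimately obtain p where p: "p \<in> range x \<union> range (\<lambda>n. - x n)" "p \<notin> F"
    "dist p w < e / 2 - norm (w - v)"
    using closure_approx_outside_finite[OF _ w(3) \<open>finite F\<close>] by blast
  obtain n s where ns: "\<bar>s\<bar> = 1" "p = s *\<^sub>R x n"
  proof -
    from p(1) consider n where "p = x n" | n where "p = - x n"
      by blast
    then show thesis
      by cases (use that[of 1] that[of "-1"] in auto)
  qed
  have "m \<le> n"
    using p(2) ns by (cases "s = 1") (auto simp: F_def abs_if split: if_splits)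
  moreover have "norm (v - p) < e"
  proof -
    have "norm (v - p) \<le> norm (v - w) + norm (w - p)"
      using norm_triangle_ineq[of "v - w" "w - p"] by simp
    moreover have "norm (w - p) < e / 2 - norm (w - v)"
      using p(3) by (simp add: dist_norm norm_minus_commute)
    ultimately show ?thesis
      using w(2) e norm_minus_commute[of v w] by linarith
  qed
  ultimately show ?thesis
    using ns by blast
qed

lemma signed_dense_halving:
  fixes x :: "nat \<Rightarrow> 'a::real_normed_vector"
  assumes norm_x: "\<And>n. norm (x n) = 1"
    and dense: "sphere 0 1 \<subseteq> closure (range x \<union> range (\<lambda>n. - x n))"
  shows "\<exists>n c. m \<le> n \<and> \<bar>c\<bar> \<le> norm r \<and> norm (r - c *\<^sub>R x n) \<le> norm r / 2"
proof (cases "r = 0")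
  case True
  then show ?thesis
    by auto
next
  case False
  define v where "v = (1 / norm r) *\<^sub>R r"
  have nr: "norm r > 0"
    using False by simp
  have "norm v = 1"
    using nr by (simp add: v_def)
  then obtain n s where ns: "m \<le> n" "\<bar>s\<bar> = 1" "norm (v - s *\<^sub>R x n) < 1 / 2"
    using signed_dense_tail_approx[OF norm_x dense, of v "1 / 2" m] by auto
  have "r - (s * norm r) *\<^sub>R x n = norm r *\<^sub>R (v - s *\<^sub>R x n)"
    using nr by (simp add: v_def algebra_simps)
  then have "norm (r - (s * norm r) *\<^sub>R x n) = norm r * norm (v - s *\<^sub>R x n)"
    by simp
  also have "\<dots> \<le> norm r / 2"
    using ns(3) nr by simp
  finally show ?thesis
    using ns by (intro exI[of _ n] exI[of _ "s * norm r"]) (auto simp: abs_mult)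
qed

lemma signed_dense_halving_functions:
  fixes x :: "nat \<Rightarrow> 'a::real_normed_vector"
  assumes norm_x: "\<And>n. norm (x n) = 1"
    and dense: "sphere 0 1 \<subseteq> closure (range x \<union> range (\<lambda>n. - x n))"
  obtains N C where "\<And>m r. m \<le> N m r" and "\<And>m r. \<bar>C m r\<bar> \<le> norm r"
    and "\<And>m r. norm (r - C m r *\<^sub>R x (N m r)) \<le> norm r / 2"
proof -
  have pointwise: "\<forall>q. \<exists>p. fst q \<le> fst p \<and> \<bar>snd p\<bar> \<le> norm (snd q)
      \<and> norm (snd q - snd p *\<^sub>R x (fst p)) \<le> norm (snd q) / 2"
  proof
    fix q :: "nat \<times> 'a"
    obtain n c where "fst q \<le> n" "\<bar>c\<bar> \<le> norm (snd q)" "norm (snd q - c *\<^sub>R x n) \<le> norm (snd q) / 2"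
      using signed_dense_halving[OF norm_x dense] by blast
    then show "\<exists>p. fst q \<le> fst p \<and> \<bar>snd p\<bar> \<le> norm (snd q) \<and> norm (snd q - snd p *\<^sub>R x (fst p)) \<le> norm (snd q) / 2"
      by (intro exI[of _ "(n, c)"]) simp
  qed
  obtain P where "\<forall>q. fst q \<le> fst (P q) \<and> \<bar>snd (P q)\<bar> \<le> norm (snd q)
      \<and> norm (snd q - snd (P q) *\<^sub>R x (fst (P q))) \<le> norm (snd q) / 2"
    using choice[OF pointwise] by blast
  then show thesis
    using that[of "\<lambda>m r. fst (P (m, r))" "\<lambda>m r. snd (P (m, r))"] by simp
qed

lemma greedy_expansion:
  fixes x :: "nat \<Rightarrow> 'a::real_normed_vector"
  assumes N: "\<And>m r. m \<le> N m r" and C: "\<And>m r. \<bar>C m r\<bar> \<le> norm r"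
    and halving: "\<And>m r. norm (r - C m r *\<^sub>R x (N m r)) \<le> norm r / 2"
  obtains n c where "strict_mono n" and "\<And>k. \<bar>c k\<bar> \<le> norm y * (1 / 2) ^ k"
    and "(\<lambda>k. c k *\<^sub>R x (n k)) sums y"
proof -
  txt \<open>\<open>st k\<close> is the pair (least admissible index, residual) after \<open>k\<close> greedy steps.\<close>
  define st where "st = rec_nat (0, y) (\<lambda>_ q. (Suc (N (fst q) (snd q)),
      snd q - C (fst q) (snd q) *\<^sub>R x (N (fst q) (snd q))))"
  define r where "r k = snd (st k)" for k
  define n where "n k = N (fst (st k)) (r k)" for k
  define c where "c k = C (fst (st k)) (r k)" for k
  have st0: "st 0 = (0, y)" and stS: "st (Suc k) = (Suc (n k), r k - c k *\<^sub>R x (n k))" for k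
    by (simp_all add: st_def r_def n_def c_def)
  have r0: "r 0 = y" and rS: "r (Suc k) = r k - c k *\<^sub>R x (n k)" for k
    by (simp_all add: r_def st0 stS)
  have "Suc (n k) \<le> n (Suc k)" for k
    using N[of "fst (st (Suc k))" "r (Suc k)"] by (simp add: n_def stS)
  then have "strict_mono n"
    by (simp add: strict_mono_Suc_iff Suc_le_eq)
  have r_bound: "norm (r k) \<le> norm y * (1 / 2) ^ k" for k
  proof (induction k)
    case (Suc k)
    have "norm (r (Suc k)) \<le> norm (r k) / 2"
      unfolding rS n_def c_def by (rule halving)
    then show ?case
      using Suc.IH by simp
  qed (simp add: r0)
  have "\<bar>c k\<bar> \<le> norm y * (1 / 2) ^ k" for k
    using C[of "fst (st k)" "r k"] r_bound[of k] unfolding c_def by linarith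
  moreover have "(\<lambda>k. c k *\<^sub>R x (n k)) sums y"
    unfolding sums_def
  proof -
    have partial: "(\<Sum>i<k. c i *\<^sub>R x (n i)) = y - r k" for k
      by (induction k) (simp_all add: r0 rS)
    have "(\<lambda>k. norm y * (1 / 2) ^ k) \<longlonglongrightarrow> 0"
      by (intro tendsto_mult_right_zero LIMSEQ_power_zero) simp
    moreover have "\<forall>\<^sub>F k in sequentially. norm (r k) \<le> norm y * (1 / 2) ^ k"
      using r_bound by (intro always_eventually allI)
    ultimately have "r \<longlonglongrightarrow> 0"
      by (rule Lim_null_comparison[rotated])
    then have "(\<lambda>k. y - r k) \<longlonglongrightarrow> y - 0"
      by (intro tendsto_diff tendsto_const)
    then show "(\<lambda>k. \<Sum>i<k. c i *\<^sub>R x (n i)) \<longlonglongrightarrow> y"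
      by (simp add: partial)
  qed
  ultimately show thesis
    using that \<open>strict_mono n\<close> by blast
qed

section \<open>Restriction from Y to the dual of W\<close>

context block_norm_space
begin

lemma coord_comb_bdd_funcs:
  "(\<lambda>a. \<Sum>j<n. c j * coord_fun (Zsp x u) j a) \<in> bdd_funcs (Zsp x u) (znorm x u)"
proof (rule bdd_funcsI[where C = "\<Sum>j<n. \<bar>c j\<bar>"])
  have Z: "subspace (Zsp x u)"
    by (rule seminorm_onD(1)[OF seminorm_on_Zsp])
  show "(\<Sum>j<n. c j * coord_fun (Zsp x u) j (a + b))
      = (\<Sum>j<n. c j * coord_fun (Zsp x u) j a) + (\<Sum>j<n. c j * coord_fun (Zsp x u) j b)"
    if "a \<in> Zsp x u" "b \<in> Zsp x u" for a b
    using that subspace_add[OF Z that] by (simp add: coord_fun_def sum.distrib algebra_simps)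
  show "(\<Sum>j<n. c j * coord_fun (Zsp x u) j (r *\<^sub>R a)) = r * (\<Sum>j<n. c j * coord_fun (Zsp x u) j a)"
    if "a \<in> Zsp x u" for r a
    using that subspace_scale[OF Z that] by (simp add: coord_fun_def sum_distrib_left algebra_simps)
  show "\<bar>\<Sum>j<n. c j * coord_fun (Zsp x u) j a\<bar> \<le> (\<Sum>j<n. \<bar>c j\<bar>) * znorm x u a"
    if a: "a \<in> Zsp x u" for a
  proof -
    have "\<bar>\<Sum>j<n. c j * coord_fun (Zsp x u) j a\<bar> \<le> (\<Sum>j<n. \<bar>c j\<bar> * \<bar>a j\<bar>)"
      using a by (simp add: coord_fun_def abs_mult[symmetric] sum_abs)
    also have "\<dots> \<le> (\<Sum>j<n. \<bar>c j\<bar> * znorm x u a)"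
      using abs_le_znorm[OF Zsp_zbounded[OF a]] by (intro sum_mono mult_left_mono) auto
    finally show ?thesis
      by (simp add: sum_distrib_right)
  qed
  show "(\<Sum>j<n. c j * coord_fun (Zsp x u) j a) = 0" if "a \<notin> Zsp x u" for a
    using that by (simp add: coord_fun_def)
qed

lemma sum_lessThan_pad:
  fixes h :: "nat \<Rightarrow> real"
  assumes "n \<le> m"
  shows "(\<Sum>j<m. (if j < n then c j else 0) * h j) = (\<Sum>j<n. c j * h j)"
proof -
  have "(\<Sum>j<m. (if j < n then c j else 0) * h j) = (\<Sum>j\<in>{..<m}. if j \<in> {..<n} then c j * h j else 0)"
    by (rule sum.cong) auto
  also have "\<dots> = (\<Sum>j\<in>{..<m} \<inter> {..<n}. c j * h j)"
    by (simp add: sum.inter_restrict)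
  also have "{..<m} \<inter> {..<n} = {..<n}"
    using assms by auto
  finally show ?thesis .
qed

lemma Yspace_diff:
  assumes f: "f \<in> Yspace x u" and g: "g \<in> Yspace x u"
  shows "(\<lambda>a. f a - g a) \<in> Yspace x u"
proof -
  let ?E = "bdd_funcs (Zsp x u) (znorm x u)" and ?D = "dnorm (Zsp x u) (znorm x u)"
  let ?comb = "\<lambda>n c a. \<Sum>j<n. c j * coord_fun (Zsp x u) j a"
  have fE: "f \<in> ?E" and gE: "g \<in> ?E"
    using f g by (auto simp: Yspace_def)
  have "\<forall>\<epsilon>>0. \<exists>n c. ?D (\<lambda>a. (f a - g a) - ?comb n c a) < \<epsilon>"
  proof (intro allI impI)
    fix \<epsilon> :: real assume "\<epsilon> > 0"
    have "\<epsilon> / 2 > 0"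
      using \<open>\<epsilon> > 0\<close> by simp
    then obtain n1 c1 n2 c2 where 1: "?D (\<lambda>a. f a - ?comb n1 c1 a) < \<epsilon> / 2"
      and 2: "?D (\<lambda>a. g a - ?comb n2 c2 a) < \<epsilon> / 2"
      using f g unfolding Yspace_def mem_Collect_eq by blast
    define m where "m = max n1 n2"
    define c where "c j = (if j < n1 then c1 j else 0) - (if j < n2 then c2 j else 0)" for j
    have "?comb m c a = ?comb n1 c1 a - ?comb n2 c2 a" for a
      using sum_lessThan_pad[of n1 m c1] sum_lessThan_pad[of n2 m c2]
      by (simp add: c_def m_def left_diff_distrib sum_subtractf)
    then have eq: "(\<lambda>a. (f a - g a) - ?comb m c a) = (\<lambda>a. (f a - ?comb n1 c1 a) - (g a - ?comb n2 c2 a))"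
      by (simp add: fun_eq_iff)
    have "?D (\<lambda>a. (f a - ?comb n1 c1 a) - (g a - ?comb n2 c2 a))
        \<le> ?D (\<lambda>a. f a - ?comb n1 c1 a) + ?D (\<lambda>a. g a - ?comb n2 c2 a)"
      by (intro dnorm_diff_le[OF seminorm_on_Zsp] bdd_funcs_diff fE gE coord_comb_bdd_funcs)
    then have "?D (\<lambda>a. (f a - g a) - ?comb m c a) < \<epsilon>"
      unfolding eq using 1 2 by linarith
    then show "\<exists>n c. ?D (\<lambda>a. (f a - g a) - ?comb n c a) < \<epsilon>"
      by (intro exI[of _ m] exI[of _ c])
  qed
  with bdd_funcs_diff[OF fE gE] show ?thesis
    unfolding Yspace_def mem_Collect_eq by (rule conjI)
qed

lemma Qmap_diff: "a \<in> Zsp x u \<Longrightarrow> b \<in> Zsp x u \<Longrightarrow> Qmap x (a - b) = Qmap x a - Qmap x b"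
  unfolding Qmap_def by (simp add: scaleR_diff_left suminf_diff Zsp_summable)

lemma Qadj_range_vanishes:
  assumes "q \<in> Qadj_range x u" and "a \<in> Wsp x u"
  shows "q a = 0"
proof -
  obtain \<phi> :: "'a \<Rightarrow> real" where "bounded_linear \<phi>" and "q = (\<lambda>a. if a \<in> Zsp x u then \<phi> (Qmap x a) else 0)"
    using assms(1) unfolding Qadj_range_def by blast
  then show ?thesis
    using assms(2) linear_0[OF bounded_linear.linear] by (simp add: Wsp_def)
qed

end

locale signed_dense_block_space = block_norm_space +
  assumes dense: "sphere 0 1 \<subseteq> closure (range x \<union> range (\<lambda>n. - x n))"
begin

lemma Qmap_lift: "\<exists>z\<in>Zsp x u. Qmap x z = y \<and> znorm x u z \<le> 2 * norm y"
proof -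
  obtain N C where NC: "\<And>m r. m \<le> N m r" "\<And>m r. \<bar>C m r\<bar> \<le> norm r"
    "\<And>m r. norm (r - C m r *\<^sub>R x (N m r)) \<le> norm r / 2"
    using signed_dense_halving_functions[OF norm_x dense] by blast
  obtain n c where n: "strict_mono n" and c: "\<And>k. \<bar>c k\<bar> \<le> norm y * (1 / 2) ^ k"
    and c_sums: "(\<lambda>k. c k *\<^sub>R x (n k)) sums y"
    using greedy_expansion[OF NC] by blast
  define z where "z j = (if j \<in> range n then c (inv n j) else 0)" for j
  have z_n: "z (n k) = c k" for k
    using strict_mono_imp_inj_on[OF n] by (simp add: z_def)
  have z_out: "z j = 0" if "j \<notin> range n" for j
    using that by (simp add: z_def)
  have geometric: "(\<lambda>k. norm y * (1 / 2) ^ k) sums (2 * norm y)"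
    using sums_mult[OF geometric_sums[of "1 / 2 :: real"], of "norm y"] by (simp add: mult.commute)
  have abs_c: "summable (\<lambda>k. \<bar>c k\<bar>)"
    using c by (intro summable_comparison_test[OF _ sums_summable[OF geometric]]) auto
  have "(\<lambda>j. \<bar>z j\<bar>) sums (\<Sum>k. \<bar>c k\<bar>)"
    using sums_mono_reindex[OF n, of "\<lambda>j. \<bar>z j\<bar>"] z_out summable_sums[OF abs_c] by (simp add: z_n)
  moreover have "(\<Sum>k. \<bar>c k\<bar>) \<le> 2 * norm y"
    using suminf_le[OF c abs_c sums_summable[OF geometric]] sums_unique[OF geometric] by simp
  ultimately have "z \<in> Zsp x u" and "znorm x u z \<le> 2 * norm y"
    using summable_abs_in_Zsp znorm_le_suminf_abs(2) sums_summable sums_unique by fastforce+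
  moreover have "(\<lambda>j. z j *\<^sub>R x j) sums y"
    using sums_mono_reindex[OF n, of "\<lambda>j. z j *\<^sub>R x j"] z_out c_sums by (simp add: z_n)
  then have "Qmap x z = y"
    by (simp add: Qmap_def sums_iff)
  ultimately show ?thesis
    by blast
qed

lemma Qmap_right_inverse:
  obtains L where "\<And>y. L y \<in> Zsp x u" and "\<And>y. Qmap x (L y) = y"
    and "\<And>y. znorm x u (L y) \<le> 2 * norm y"
proof -
  have "\<forall>y. \<exists>z. z \<in> Zsp x u \<and> Qmap x z = y \<and> znorm x u z \<le> 2 * norm y"
    using Qmap_lift by blast
  then obtain L where "\<forall>y. L y \<in> Zsp x u \<and> Qmap x (L y) = y \<and> znorm x u (L y) \<le> 2 * norm y"
    by (rule choice[THEN exE])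
  then show thesis
    using that by blast
qed

lemma annihilator_in_Qadj_range:
  assumes g: "g \<in> bdd_funcs (Zsp x u) (znorm x u)" and gW: "\<And>a. a \<in> Wsp x u \<Longrightarrow> g a = 0"
  shows "g \<in> Qadj_range x u"
proof -
  have Z: "subspace (Zsp x u)"
    by (rule seminorm_onD(1)[OF seminorm_on_Zsp])
  obtain L where LZ: "\<And>y. L y \<in> Zsp x u" and QL: "\<And>y. Qmap x (L y) = y"
    and L_le: "\<And>y. znorm x u (L y) \<le> 2 * norm y"
    using Qmap_right_inverse by blast
  have fiber: "g a = g b" if a: "a \<in> Zsp x u" and b: "b \<in> Zsp x u" and ab: "Qmap x a = Qmap x b" for a b
  proof -
    have "a - b \<in> Wsp x u"
      using subspace_diff[OF Z a b] Qmap_diff[OF a b] ab by (simp add: Wsp_def)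
    then show ?thesis
      using gW bdd_funcs_diff_apply[OF g Z a b] by simp
  qed
  define \<phi> where "\<phi> y = g (L y)" for y
  have "bounded_linear \<phi>"
  proof (rule bounded_linear_intro[where K = "2 * dnorm (Zsp x u) (znorm x u) g"])
    show "\<phi> (y1 + y2) = \<phi> y1 + \<phi> y2" for y1 y2
      using fiber[OF LZ subspace_add[OF Z LZ LZ]] Qmap_add[OF LZ LZ] QL bdd_funcs_add[OF g LZ LZ]
      by (simp add: \<phi>_def)
    show "\<phi> (r *\<^sub>R y) = r *\<^sub>R \<phi> y" for r y
      using fiber[OF LZ subspace_scale[OF Z LZ]] Qmap_scale[OF LZ] QL bdd_funcs_scale[OF g LZ]
      by (simp add: \<phi>_def)
    show "norm (\<phi> y) \<le> norm y * (2 * dnorm (Zsp x u) (znorm x u) g)" for y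
    proof -
      have "\<bar>g (L y)\<bar> \<le> dnorm (Zsp x u) (znorm x u) g * znorm x u (L y)"
        by (rule dnorm_bound[OF seminorm_on_Zsp g LZ])
      also have "\<dots> \<le> dnorm (Zsp x u) (znorm x u) g * (2 * norm y)"
        using L_le dnorm_nonneg[OF seminorm_on_Zsp g] by (intro mult_left_mono) auto
      finally show ?thesis
        by (simp add: \<phi>_def algebra_simps)
    qed
  qed
  moreover have "g = (\<lambda>a. if a \<in> Zsp x u then \<phi> (Qmap x a) else 0)"
  proof
    fix a
    show "g a = (if a \<in> Zsp x u then \<phi> (Qmap x a) else 0)"
      using fiber[OF _ LZ, of a "Qmap x a"] QL bdd_funcs_outside[OF g] by (simp add: \<phi>_def)
  qed
  ultimately show ?thesis
    unfolding Qadj_range_def by blast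
qed

lemma Yspace_eq_on_Wsp:
  assumes sum: "top_direct_sum (bdd_funcs (Zsp x u) (znorm x u)) (dnorm (Zsp x u) (znorm x u))
      (Yspace x u) (Qadj_range x u)"
    and f: "f \<in> Yspace x u" and g: "g \<in> Yspace x u" and fg: "\<And>a. a \<in> Wsp x u \<Longrightarrow> f a = g a"
  shows "f = g"
proof -
  have "(\<lambda>a. f a - g a) \<in> Yspace x u"
    by (rule Yspace_diff[OF f g])
  moreover have "(\<lambda>a. f a - g a) \<in> Qadj_range x u"
    using calculation sum fg unfolding top_direct_sum_def by (intro annihilator_in_Qadj_range) auto
  ultimately have "(\<lambda>a. f a - g a) = (\<lambda>a. 0)"
    using sum unfolding top_direct_sum_def by blast
  then show "f = g"
    by (simp add: fun_eq_iff)
qed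

lemma Yspace_extends_dual_Wsp:
  assumes sum: "top_direct_sum (bdd_funcs (Zsp x u) (znorm x u)) (dnorm (Zsp x u) (znorm x u))
      (Yspace x u) (Qadj_range x u)"
  obtains K where "\<And>g. g \<in> bdd_funcs (Wsp x u) (znorm x u) \<Longrightarrow> \<exists>f\<in>Yspace x u.
      (\<forall>a\<in>Wsp x u. f a = g a) \<and> dnorm (Zsp x u) (znorm x u) f \<le> K * dnorm (Wsp x u) (znorm x u) g"
proof -
  let ?E = "bdd_funcs (Zsp x u) (znorm x u)" and ?D = "dnorm (Zsp x u) (znorm x u)"
  obtain C where C: "\<And>f q. f \<in> Yspace x u \<Longrightarrow> q \<in> Qadj_range x u \<Longrightarrow> ?D f \<le> C * ?D (\<lambda>a. f a + q a)"
    using sum unfolding top_direct_sum_def by blast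
  have "\<exists>f\<in>Yspace x u. (\<forall>a\<in>Wsp x u. f a = g a) \<and> ?D f \<le> max C 0 * dnorm (Wsp x u) (znorm x u) g"
    if g: "g \<in> bdd_funcs (Wsp x u) (znorm x u)" for g
  proof -
    obtain h where h: "h \<in> ?E" and hg: "\<And>a. a \<in> Wsp x u \<Longrightarrow> h a = g a"
      and h_le: "?D h \<le> dnorm (Wsp x u) (znorm x u) g"
      using bdd_funcs_extension[OF seminorm_on_Zsp subspace_Wsp Wsp_subset_Zsp g] by blast
    obtain f q where f: "f \<in> Yspace x u" and q: "q \<in> Qadj_range x u" and hfq: "h = (\<lambda>a. f a + q a)"
      using sum h unfolding top_direct_sum_def by blast
    have "\<forall>a\<in>Wsp x u. f a = g a"
      using hg hfq Qadj_range_vanishes[OF q] by simp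
    moreover have "?D f \<le> max C 0 * dnorm (Wsp x u) (znorm x u) g"
    proof -
      have "?D f \<le> C * ?D h"
        using C[OF f q] hfq by simp
      also have "\<dots> \<le> max C 0 * ?D h"
        using dnorm_nonneg[OF seminorm_on_Zsp h] by (intro mult_right_mono) auto
      also have "\<dots> \<le> max C 0 * dnorm (Wsp x u) (znorm x u) g"
        using h_le by (intro mult_left_mono) auto
      finally show ?thesis .
    qed
    ultimately show ?thesis
      using f by blast
  qed
  then show thesis
    by (rule that)
qed

theorem Yspace_isomorphic_dual_Wsp:
  assumes sum: "top_direct_sum (bdd_funcs (Zsp x u) (znorm x u)) (dnorm (Zsp x u) (znorm x u))
      (Yspace x u) (Qadj_range x u)"
  shows "fs_isomorphic (Yspace x u) (dnorm (Zsp x u) (znorm x u))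
      (bdd_funcs (Wsp x u) (znorm x u)) (dnorm (Wsp x u) (znorm x u))"
proof -
  obtain K where K: "\<And>g. g \<in> bdd_funcs (Wsp x u) (znorm x u) \<Longrightarrow> \<exists>f\<in>Yspace x u.
      (\<forall>a\<in>Wsp x u. f a = g a) \<and> dnorm (Zsp x u) (znorm x u) f \<le> K * dnorm (Wsp x u) (znorm x u) g"
    using Yspace_extends_dual_Wsp[OF sum] by blast
  have "Yspace x u \<subseteq> bdd_funcs (Zsp x u) (znorm x u)"
    using sum unfolding top_direct_sum_def by blast
  then show ?thesis
    using fs_isomorphic_restriction[OF seminorm_on_Zsp subspace_Wsp Wsp_subset_Zsp _ Yspace_eq_on_Wsp[OF sum] K]
    by blast
qed

end

theorem propositionA9:
  fixes x :: "nat \<Rightarrow> 'a::banach" and u :: "nat \<Rightarrow> 'b::banach"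
  assumes "\<exists>D::'a set. countable D \<and> closure D = UNIV"
    and "\<forall>n. norm (x n) = 1"
    and "sphere 0 1 \<subseteq> closure (range x \<union> range (\<lambda>n. - x n))"
    and "schauder_basis u" and "\<forall>n. norm (u n) = 1"
    and "one_unconditional u" and "boundedly_complete u"
    and "top_direct_sum (bdd_funcs (Zsp x u) (znorm x u)) (dnorm (Zsp x u) (znorm x u))
           (Yspace x u) (Qadj_range x u)"
  shows "fs_isomorphic (Yspace x u) (dnorm (Zsp x u) (znorm x u))
           (bdd_funcs (Wsp x u) (znorm x u)) (dnorm (Wsp x u) (znorm x u))"
proof -
  interpret signed_dense_block_space x u
    using assms(2,3,5,6) by unfold_locales auto
  show ?thesis
    using assms(8) by (rule Yspace_isomorphic_dual_Wsp)
qed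

end
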